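(* Let $V$ be a braided vector space of diagonal type over a field $F$ of characteristic zero with basis $x_1,\dots,x_n$ and braiding $C(x_i\otimes x_j)=p_{i,j}x_j\otimes x_i$, and let $\mathfrak B(V)$ be its Nichols algebra. The following are equivalent: (1) $\mathfrak B(V)=F\oplus\mathfrak L(V)_L$; (2) $\mathfrak B(V)=F\oplus\mathfrak L^-(V)$; (3) $p_{i,i}=-1$ and $p_{i,j}p_{j,i}=1$ for all $1\le i\ne j\le n$, and for every $m\ge2$ and every strictly decreasing sequence of letters $h_1>h_2>\cdots>h_m$ in $\{x_1,\dots,x_n\}$ (with $x_1<\cdots<x_n$) there exists $\tau\in\mathbb S_m$ such that $\prod_{j=1}^{m-1}\bigl(p_{h_{\tau(j)},\,h_{\tau(m)}\cdots h_{\tau(j+1)}}-1\bigr)\neq0$.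
   Context: $\mathfrak B(V)=T(V)/\bigoplus_{m\ge2}\ker S_m$ is $\mathbb Z^n$-graded with $\deg x_i=e_i$; for homogeneous $u,v$ with $\deg u=\sum a_ie_i$, $\deg v=\sum b_je_j$ put $p_{u,v}=\prod p_{i,j}^{a_ib_j}$. $\mathfrak L(V)_L$ is the Lie subalgebra of $\mathfrak B(V)$ generated by $V$ under $[u,v]_L=p_{v,u}uv-p_{u,v}vu$; $\mathfrak L^-(V)$ is the Lie subalgebra generated by $V$ under $[u,v]^-=uv-vu$; $F$ denotes the scalars $F\cdot1$ and equalities are as vector spaces. *)

theory Defs
  imports "HOL-Combinatorics.Permutations"
begin

text \<open>Tensor algebra T(V) on basis x_0..x_{n-1}: elements are finitely supported
 functions from words (lists of letter indices < n) to the field.\<close>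

type_synonym 'a tens = "nat list \<Rightarrow> 'a"

definition in_T :: "nat \<Rightarrow> 'a::field tens \<Rightarrow> bool" where
  "in_T n f \<longleftrightarrow> finite {w. f w \<noteq> 0} \<and> (\<forall>w. f w \<noteq> 0 \<longrightarrow> set w \<subseteq> {..<n})"

definition tmul :: "'a::field tens \<Rightarrow> 'a tens \<Rightarrow> 'a tens" where
  "tmul f g = (\<lambda>w. \<Sum>k\<in>{..length w}. f (take k w) * g (drop k w))"

definition tone :: "'a::field tens" where
  "tone = (\<lambda>w. if w = [] then 1 else 0)"

definition letter :: "nat \<Rightarrow> 'a::field tens" where
  "letter i = (\<lambda>w. if w = [i] then 1 else 0)"

text \<open>p_{u,v} for homogeneous elements of degrees given by the words u, v.\<close>
definition pw :: "(nat \<Rightarrow> nat \<Rightarrow> 'a::field) \<Rightarrow> nat list \<Rightarrow> nat list \<Rightarrow> 'a" where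
  "pw p u v = (\<Prod>i<length u. \<Prod>j<length v. p (u ! i) (v ! j))"

datatype btree = Leaf nat | Node btree btree

fun leaves :: "btree \<Rightarrow> nat list" where
  "leaves (Leaf i) = [i]"
| "leaves (Node s t) = leaves s @ leaves t"

fun evL :: "(nat \<Rightarrow> nat \<Rightarrow> 'a::field) \<Rightarrow> btree \<Rightarrow> 'a tens" where
  "evL p (Leaf i) = letter i"
| "evL p (Node s t) = (\<lambda>w. pw p (leaves t) (leaves s) * tmul (evL p s) (evL p t) w
                          - pw p (leaves s) (leaves t) * tmul (evL p t) (evL p s) w)"

fun evM :: "btree \<Rightarrow> 'a::field tens" where
  "evM (Leaf i) = letter i"
| "evM (Node s t) = (\<lambda>w. tmul (evM s) (evM t) w - tmul (evM t) (evM s) w)"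

definition tspan :: "'a::field tens set \<Rightarrow> 'a tens set" where
  "tspan S = {f. \<exists>(m::nat) c g. (\<forall>k<m. g k \<in> S) \<and> f = (\<lambda>w. \<Sum>k<m. c k * g k w)}"

definition lie_L :: "nat \<Rightarrow> (nat \<Rightarrow> nat \<Rightarrow> 'a::field) \<Rightarrow> 'a tens set" where
  "lie_L n p = tspan (evL p ` {t. set (leaves t) \<subseteq> {..<n}})"

definition lie_minus :: "nat \<Rightarrow> 'a::field tens set" where
  "lie_minus n = tspan (evM ` {t. set (leaves t) \<subseteq> {..<n}})"

text \<open>Quantum symmetrizer S_m for the diagonal braiding C(x_i \<otimes> x_j) = p_{i,j} x_j \<otimes> x_i.\<close>
definition perm_word :: "nat list \<Rightarrow> (nat \<Rightarrow> nat) \<Rightarrow> nat list" where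
  "perm_word u \<sigma> = map (\<lambda>k. u ! (\<sigma> k)) [0..<length u]"

definition sym_coef :: "(nat \<Rightarrow> nat \<Rightarrow> 'a::field) \<Rightarrow> nat list \<Rightarrow> (nat \<Rightarrow> nat) \<Rightarrow> 'a" where
  "sym_coef p u \<sigma> = (\<Prod>l<length u. \<Prod>k<l. if \<sigma> l < \<sigma> k then p (u ! (\<sigma> l)) (u ! (\<sigma> k)) else 1)"

definition symm :: "nat \<Rightarrow> (nat \<Rightarrow> nat \<Rightarrow> 'a::field) \<Rightarrow> nat \<Rightarrow> 'a tens \<Rightarrow> 'a tens" where
  "symm n p m f = (\<lambda>w. \<Sum>u\<in>{u. length u = m \<and> set u \<subseteq> {..<n}}.
      f u * (\<Sum>\<sigma>\<in>{\<sigma>. \<sigma> permutes {..<m} \<and> perm_word u \<sigma> = w}. sym_coef p u \<sigma>))"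

definition comp :: "nat \<Rightarrow> 'a::field tens \<Rightarrow> 'a tens" where
  "comp m f = (\<lambda>w. if length w = m then f w else 0)"

definition nichols_ideal :: "nat \<Rightarrow> (nat \<Rightarrow> nat \<Rightarrow> 'a::field) \<Rightarrow> 'a tens set" where
  "nichols_ideal n p = {f. in_T n f \<and> f [] = 0 \<and> (\<forall>w. length w = 1 \<longrightarrow> f w = 0)
      \<and> (\<forall>m\<ge>2. symm n p m (comp m f) = (\<lambda>_. 0))}"

text \<open>B(V) = F \<oplus> L, where L is given by its preimage-generating set in T(V)
  and B(V) = T(V)/I.\<close>
definition B_eq_F_plus :: "nat \<Rightarrow> (nat \<Rightarrow> nat \<Rightarrow> 'a::field) \<Rightarrow> 'a tens set \<Rightarrow> bool" where
  "B_eq_F_plus n p L \<longleftrightarrow>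
     (\<forall>f. in_T n f \<longrightarrow> (\<exists>c l. l \<in> L \<and> (\<lambda>w. f w - c * tone w - l w) \<in> nichols_ideal n p))
   \<and> (\<forall>c l. l \<in> L \<and> (\<lambda>w. c * tone w + l w) \<in> nichols_ideal n p \<longrightarrow> c = 0 \<and> l \<in> nichols_ideal n p)"

end

theory Submission
  imports Defs
begin

text \<open>
  Write \<open>sym_form p M f = \<Sum>u. f u * inv_weight p u\<close>, the sum over the rearrangements \<open>u\<close> of a
  multidegree \<open>M\<close>, each weighted by the braiding factors of its inversions. If \<open>p\<^sub>i\<^sub>i = -1\<close> and
  \<open>p\<^sub>i\<^sub>j p\<^sub>j\<^sub>i = 1\<close>, the quantum symmetrizer kills every word with a repeated letter, and on a
  multidegree \<open>M\<close> without repeated letters it sends \<open>f\<close> to \<open>w \<mapsto> sym_form p M f / inv_weight p w\<close>,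
  so that the Nichols ideal in degree \<open>M\<close> is the kernel of \<open>sym_form p M\<close>. Hence \<open>B(V) = F \<oplus> L\<close>
  exactly when every such multidegree carries an element of \<open>L\<close> on which \<open>sym_form\<close> does not
  vanish. Right-normed brackets span each multidegree of the free Lie algebra, and \<open>sym_form\<close> of
  \<open>[x\<^bsub>h\<^sub>1\<^esub>, [x\<^bsub>h\<^sub>2\<^esub>, [\<dots>, x\<^bsub>h\<^sub>m\<^esub>]]]\<close> is a nonzero multiple of
  \<open>\<Prod>\<^sub>j (p\<^bsub>h\<^sub>j, h\<^sub>j\<^sub>+\<^sub>1 \<dots> h\<^sub>m\<^esub> - 1)\<close>, which yields the product condition; the components of
  degree two force \<open>p\<^sub>i\<^sub>i = -1\<close> and \<open>p\<^sub>i\<^sub>j p\<^sub>j\<^sub>i = 1\<close> in the first place. Finally \<open>sym_form\<close>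
  takes the same values on \<open>[-,-]\<^sub>L\<close>-brackets and on commutators up to sign, so the two Lie
  algebras satisfy the same criterion.
\<close>

lemma tmul_Nil: "tmul f g [] = f [] * g []"
  by (simp add: tmul_def)

lemma tmul_Cons: "tmul f g (a # w) = f [] * g (a # w) + tmul (\<lambda>u. f (a # u)) g w"
  unfolding tmul_def by (simp add: sum.atMost_Suc_shift del: sum.atMost_Suc)

lemma tmul_assoc: "tmul (tmul f g) h = tmul f (tmul g h)"
proof
  fix w
  show "tmul (tmul f g) h w = tmul f (tmul g h) w"
  proof (induction w arbitrary: f g)
    case Nil
    then show ?case by (simp add: tmul_Nil)
  next
    case (Cons a w)
    have lin: "tmul (\<lambda>u. c * F u + G u) h w = c * tmul F h w + tmul G h w" for c F G w
      by (simp add: tmul_def sum.distrib sum_distrib_left algebra_simps)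
    have "(\<lambda>u. tmul f g (a # u)) = (\<lambda>u. f [] * g (a # u) + tmul (\<lambda>u. f (a # u)) g u)"
      by (simp add: tmul_Cons)
    then show ?case
      by (simp add: tmul_Cons tmul_Nil lin Cons.IH algebra_simps)
  qed
qed

lemma tmul_zero_left [simp]: "tmul (\<lambda>u. 0) g w = 0"
  by (simp add: tmul_def)

lemma tmul_sum_left: "tmul (\<lambda>w. \<Sum>k<m. c k * g k w) f w = (\<Sum>k<m. c k * tmul (g k) f w)"
  by (simp add: tmul_def sum_distrib_left sum_distrib_right mult.assoc sum.swap[of _ "{..<m}"])

lemma tmul_sum_right: "tmul f (\<lambda>w. \<Sum>k<m. c k * g k w) w = (\<Sum>k<m. c k * tmul f (g k) w)"
  by (simp add: tmul_def sum_distrib_left sum_distrib_right algebra_simps sum.swap[of _ "{..<m}"])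

lemma tmul_diff_left: "tmul (\<lambda>w. f w - g w) h = (\<lambda>w. tmul f h w - tmul g h w)"
  by (simp add: tmul_def algebra_simps sum_subtractf)

lemma tmul_diff_right: "tmul h (\<lambda>w. f w - g w) = (\<lambda>w. tmul h f w - tmul h g w)"
  by (simp add: tmul_def algebra_simps sum_subtractf)

definition tword :: "nat list \<Rightarrow> 'a::field tens" where
  "tword w = (\<lambda>x. if x = w then 1 else 0)"

lemma tmul_letter_letter: "tmul (letter i) (letter j) = tword [i, j]"
proof
  fix w :: "nat list"
  show "tmul (letter i) (letter j) w = tword [i, j] w"
    by (cases w rule: remdups_adj.cases) (auto simp: tmul_Cons tmul_Nil letter_def tword_def)
qed

lemma tspanI: "\<forall>k<(m::nat). g k \<in> S \<Longrightarrow> (\<lambda>w. \<Sum>k<m. c k * g k w) \<in> tspan S"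
  unfolding tspan_def by blast

lemma tspan_zero: "(\<lambda>w. 0) \<in> tspan S"
  using tspanI[of 0] by simp

lemma tspan_add_base:
  assumes "f \<in> tspan S" "g \<in> S"
  shows "(\<lambda>w. f w + a * g w) \<in> tspan S"
proof -
  obtain m :: nat and c G where G: "\<forall>k<m. G k \<in> S" and f: "f = (\<lambda>w. \<Sum>k<m. c k * G k w)"
    using assms(1) unfolding tspan_def by blast
  have "\<forall>k<Suc m. (G(m := g)) k \<in> S"
    using G assms(2) by auto
  then have "(\<lambda>w. \<Sum>k<Suc m. (c(m := a)) k * (G(m := g)) k w) \<in> tspan S"
    by (rule tspanI)
  then show ?thesis
    by (simp add: f)
qed

lemma tspan_base: "g \<in> S \<Longrightarrow> g \<in> tspan S"
  using tspan_add_base[OF tspan_zero, of g S 1] by simp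

lemma tspan_add:
  assumes f: "f \<in> tspan S" and g: "g \<in> tspan S"
  shows "(\<lambda>w. f w + g w) \<in> tspan S"
proof -
  obtain m :: nat and c G where G: "\<forall>k<m. G k \<in> S" and g_eq: "g = (\<lambda>w. \<Sum>k<m. c k * G k w)"
    using g unfolding tspan_def by blast
  have "(\<lambda>w. f w + (\<Sum>k<m'. c k * G k w)) \<in> tspan S" if "m' \<le> m" for m'
    using that
  proof (induction m')
    case 0
    then show ?case using f by simp
  next
    case (Suc m')
    then have "(\<lambda>w. (f w + (\<Sum>k<m'. c k * G k w)) + c m' * G m' w) \<in> tspan S"
      using G by (intro tspan_add_base) auto
    then show ?case by (simp add: add.assoc)
  qed
  then show ?thesis
    using g_eq by blast
qed

lemma tspan_scale:
  assumes "f \<in> tspan S"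
  shows "(\<lambda>w. a * f w) \<in> tspan S"
proof -
  obtain m :: nat and c G where G: "\<forall>k<m. G k \<in> S" and f: "f = (\<lambda>w. \<Sum>k<m. c k * G k w)"
    using assms unfolding tspan_def by blast
  show ?thesis
    using tspanI[OF G, of "\<lambda>k. a * c k"] by (simp add: f sum_distrib_left mult.assoc)
qed

lemma tspan_diff:
  assumes "f \<in> tspan S" "g \<in> tspan S"
  shows "(\<lambda>w. f w - g w) \<in> tspan S"
  using tspan_add[OF assms(1) tspan_scale[OF assms(2), of "-1"]] by simp

lemma tspan_sum:
  assumes "\<forall>k<(m::nat). g k \<in> tspan S"
  shows "(\<lambda>w. \<Sum>k<m. c k * g k w) \<in> tspan S"
  using assms
proof (induction m)
  case 0
  then show ?case using tspan_zero by simp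
next
  case (Suc m)
  then show ?case
    using tspan_add[OF Suc.IH tspan_scale[of "g m" S "c m"]] by simp
qed

lemma linear_functional_vanishing_on_tspan:
  fixes \<Phi> :: "'a::field tens \<Rightarrow> 'a"
  assumes "f \<in> tspan S"
    and linear: "\<And>(m::nat) c g. \<Phi> (\<lambda>w. \<Sum>k<m. c k * g k w) = (\<Sum>k<m. c k * \<Phi> (g k))"
    and vanishing: "\<And>g. g \<in> S \<Longrightarrow> \<Phi> g = 0"
  shows "\<Phi> f = 0"
proof -
  obtain m :: nat and c G where G: "\<forall>k<m. G k \<in> S" and f: "f = (\<lambda>w. \<Sum>k<m. c k * G k w)"
    using assms(1) unfolding tspan_def by blast
  show ?thesis
    unfolding f linear using G vanishing by simp
qed

section \<open>Bracket trees and right-normed brackets\<close>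

lemma mset_eq_pair_iff: "mset u = mset [a, b] \<longleftrightarrow> u = [a, b] \<or> u = [b, a]"
proof
  assume mset_u: "mset u = mset [a, b]"
  then have "length u = 2"
    using mset_eq_length by fastforce
  then obtain x y where u: "u = [x, y]"
    by (auto simp: length_Suc_conv numeral_2_eq_2)
  then have "{#x, y#} = {#a, b#}"
    using mset_u by simp
  then show "u = [a, b] \<or> u = [b, a]"
    using u by (auto simp: add_eq_conv_ex)
qed auto

lemma leaves_ne_Nil: "leaves t \<noteq> []"
  by (induction t) auto

lemma leaves_eq_singleton_iff: "leaves t = [x] \<longleftrightarrow> t = Leaf x"
proof (cases t)
  case (Node s r)
  obtain a as b bs where "leaves s = a # as" "leaves r = b # bs"
    using leaves_ne_Nil[of s] leaves_ne_Nil[of r] by (meson list.exhaust)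
  then show ?thesis
    using Node by simp
qed simp

lemma leaves_eq_pair: "leaves t = [x, y] \<Longrightarrow> t = Node (Leaf x) (Leaf y)"
proof (cases t)
  case (Node s r)
  assume "leaves t = [x, y]"
  moreover obtain a as b bs where "leaves s = a # as" "leaves r = b # bs"
    using leaves_ne_Nil[of s] leaves_ne_Nil[of r] by (meson list.exhaust)
  ultimately have "leaves s = [x]" "leaves r = [y]"
    using Node by (cases as; simp)+
  then show ?thesis
    using Node by (simp add: leaves_eq_singleton_iff)
qed simp

lemma mset_leaves_eq_pair:
  "mset (leaves t) = mset [a, b] \<Longrightarrow> t = Node (Leaf a) (Leaf b) \<or> t = Node (Leaf b) (Leaf a)"
  unfolding mset_eq_pair_iff using leaves_eq_pair by blast

definition tbracket :: "'a::field tens \<Rightarrow> 'a tens \<Rightarrow> 'a tens" where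
  "tbracket f g = (\<lambda>w. tmul f g w - tmul g f w)"

lemma evM_Node_tbracket: "evM (Node s t) = tbracket (evM s) (evM t)"
  by (simp add: tbracket_def)

lemma tbracket_jacobi:
  "tbracket (tbracket a u) v = (\<lambda>w. tbracket a (tbracket u v) w - tbracket u (tbracket a v) w)"
proof
  fix w
  show "tbracket (tbracket a u) v w = tbracket a (tbracket u v) w - tbracket u (tbracket a v) w"
    unfolding tbracket_def tmul_diff_left tmul_diff_right tmul_assoc by simp
qed

lemma tbracket_sum_left:
  "tbracket (\<lambda>w. \<Sum>k<m. c k * g k w) f = (\<lambda>w. \<Sum>k<m. c k * tbracket (g k) f w)"
  unfolding tbracket_def by (simp add: tmul_sum_left tmul_sum_right algebra_simps sum_subtractf)

lemma tbracket_sum_right: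
  "tbracket f (\<lambda>w. \<Sum>k<m. c k * g k w) = (\<lambda>w. \<Sum>k<m. c k * tbracket f (g k) w)"
  unfolding tbracket_def by (simp add: tmul_sum_left tmul_sum_right algebra_simps sum_subtractf)

text \<open>The value \<open>right_normed [] = Leaf 0\<close> is junk.\<close>

fun right_normed :: "nat list \<Rightarrow> btree" where
  "right_normed [] = Leaf 0"
| "right_normed [a] = Leaf a"
| "right_normed (a # b # zs) = Node (Leaf a) (right_normed (b # zs))"

lemma leaves_right_normed: "zs \<noteq> [] \<Longrightarrow> leaves (right_normed zs) = zs"
  by (induction zs rule: right_normed.induct) auto

definition right_normed_brackets :: "nat multiset \<Rightarrow> 'a::field tens set" where
  "right_normed_brackets M = {evM (right_normed zs) | zs. zs \<noteq> [] \<and> mset zs = M}"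

lemma tbracket_letter_in_span:
  assumes "v \<in> tspan (right_normed_brackets N)"
  shows "tbracket (letter a) v \<in> tspan (right_normed_brackets (add_mset a N))"
proof -
  obtain m :: nat and c g where g: "\<forall>k<m. g k \<in> right_normed_brackets N"
    and v: "v = (\<lambda>w. \<Sum>k<m. c k * g k w)"
    using assms unfolding tspan_def by blast
  have "tbracket (letter a) (g k) \<in> right_normed_brackets (add_mset a N)" if "k < m" for k
  proof -
    have "g k \<in> right_normed_brackets N"
      using g that by blast
    then obtain zs where zs: "zs \<noteq> []" "mset zs = N" and gk: "g k = evM (right_normed zs)"
      unfolding right_normed_brackets_def by auto
    obtain b ys where zs_eq: "zs = b # ys"
      using zs(1) by (cases zs) auto
    have "tbracket (letter a) (g k) = evM (right_normed (a # zs))"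
      unfolding gk zs_eq by (simp add: tbracket_def)
    moreover have "evM (right_normed (a # zs)) \<in> right_normed_brackets (add_mset a N)"
      unfolding right_normed_brackets_def using zs by (intro CollectI exI[of _ "a # zs"]) auto
    ultimately show ?thesis
      by simp
  qed
  then show ?thesis
    unfolding v tbracket_sum_right by (intro tspan_sum) (auto intro: tspan_base)
qed

text \<open>The Jacobi identity \<open>[[a, u], v] = [a, [u, v]] - [u, [a, v]]\<close> peels the letters off a
  right-normed left factor one at a time.\<close>

lemma tbracket_right_normed_in_span:
  assumes "zs \<noteq> []" "v \<in> tspan (right_normed_brackets N)"
  shows "tbracket (evM (right_normed zs)) v \<in> tspan (right_normed_brackets (mset zs + N))"
  using assms
proof (induction zs arbitrary: N v rule: right_normed.induct)
  case 1
  then show ?case by simp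
next
  case (2 a)
  then show ?case using tbracket_letter_in_span[of v N a] by simp
next
  case (3 a b zs)
  let ?u = "evM (right_normed (b # zs)) :: 'a tens"
  have "tbracket ?u v \<in> tspan (right_normed_brackets (mset (b # zs) + N))"
    using 3 by simp
  then have outer: "tbracket (letter a) (tbracket ?u v)
      \<in> tspan (right_normed_brackets (mset (a # b # zs) + N))"
    using tbracket_letter_in_span[of "tbracket ?u v" _ a] by simp
  have "tbracket (letter a) v \<in> tspan (right_normed_brackets (add_mset a N))"
    using tbracket_letter_in_span[OF "3.prems"(2)] .
  then have inner: "tbracket ?u (tbracket (letter a) v)
      \<in> tspan (right_normed_brackets (mset (a # b # zs) + N))"
    using "3.IH"[of "tbracket (letter a) v" "add_mset a N"] by simp
  show ?case
    unfolding right_normed.simps evM_Node_tbracket evM.simps(1) tbracket_jacobi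
    by (rule tspan_diff[OF outer inner])
qed

lemma evM_in_span_right_normed: "evM t \<in> tspan (right_normed_brackets (mset (leaves t)))"
proof (induction t)
  case (Leaf i)
  have "evM (right_normed [i]) \<in> right_normed_brackets (mset [i])"
    unfolding right_normed_brackets_def by blast
  then show ?case
    using tspan_base by fastforce
next
  case (Node s t)
  obtain m :: nat and c and g :: "nat \<Rightarrow> 'a tens"
    where g: "\<forall>k<m. g k \<in> right_normed_brackets (mset (leaves s))"
    and s: "evM s = (\<lambda>w. \<Sum>k<m. c k * g k w)"
    using Node.IH(1) unfolding tspan_def by blast
  have "tbracket (g k) (evM t) \<in> tspan (right_normed_brackets (mset (leaves (Node s t))))"
    if "k < m" for k
  proof -
    have "g k \<in> right_normed_brackets (mset (leaves s))"
      using g that by blast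
    then obtain zs where zs: "zs \<noteq> []" "mset zs = mset (leaves s)" "g k = evM (right_normed zs)"
      unfolding right_normed_brackets_def by auto
    show ?thesis
      using tbracket_right_normed_in_span[OF zs(1) Node.IH(2)] zs by simp
  qed
  then show ?case
    unfolding evM_Node_tbracket s tbracket_sum_left by (intro tspan_sum) auto
qed

definition homogeneous :: "'a::zero tens \<Rightarrow> nat multiset \<Rightarrow> bool" where
  "homogeneous f A \<longleftrightarrow> (\<forall>w. f w \<noteq> 0 \<longrightarrow> mset w = A)"

lemma homogeneousD: "homogeneous f A \<Longrightarrow> mset w \<noteq> A \<Longrightarrow> f w = 0"
  unfolding homogeneous_def by blast

lemma homogeneous_letter: "homogeneous (letter i) {#i#}"
  by (simp add: homogeneous_def letter_def)

lemma homogeneous_tword: "homogeneous (tword w) (mset w)"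
  by (simp add: homogeneous_def tword_def)

lemma homogeneous_lincomb:
  fixes f g :: "'a::field tens"
  assumes "homogeneous f A" "homogeneous g A"
  shows "homogeneous (\<lambda>w. a * f w - b * g w) A"
  unfolding homogeneous_def
proof (intro allI impI)
  fix w
  assume "a * f w - b * g w \<noteq> 0"
  then have "f w \<noteq> 0 \<or> g w \<noteq> 0"
    by auto
  then show "mset w = A"
    using assms unfolding homogeneous_def by blast
qed

lemma homogeneous_diff:
  fixes f g :: "'a::field tens"
  assumes "homogeneous f A" "homogeneous g A"
  shows "homogeneous (\<lambda>w. f w - g w) A"
  using homogeneous_lincomb[OF assms, of 1 1] by simp

lemma homogeneous_tmul:
  assumes "homogeneous f A" "homogeneous g B"
  shows "homogeneous (tmul f g) (A + B)"
  unfolding homogeneous_def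
proof (intro allI impI)
  fix w
  assume "tmul f g w \<noteq> 0"
  then obtain k where "f (take k w) * g (drop k w) \<noteq> 0"
    unfolding tmul_def by (meson sum.not_neutral_contains_not_neutral)
  then have "mset (take k w) = A" "mset (drop k w) = B"
    using assms unfolding homogeneous_def by auto
  then show "mset w = A + B"
    by (metis append_take_drop_id mset_append)
qed

lemma homogeneous_evM: "homogeneous (evM t) (mset (leaves t))"
proof (induction t)
  case (Node s t)
  have "homogeneous (tmul (evM s) (evM t) :: 'a tens) (mset (leaves (Node s t)))"
    using homogeneous_tmul[OF Node.IH] by simp
  moreover have "homogeneous (tmul (evM t) (evM s) :: 'a tens) (mset (leaves (Node s t)))"
    using homogeneous_tmul[OF Node.IH(2,1)] by (simp add: add.commute)
  ultimately show ?case
    by (simp add: homogeneous_diff)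
qed (simp add: homogeneous_letter)

lemma homogeneous_evL: "homogeneous (evL p t) (mset (leaves t))"
proof (induction t)
  case (Node s t)
  have "homogeneous (tmul (evL p s) (evL p t)) (mset (leaves (Node s t)))"
    using homogeneous_tmul[OF Node.IH] by simp
  moreover have "homogeneous (tmul (evL p t) (evL p s)) (mset (leaves (Node s t)))"
    using homogeneous_tmul[OF Node.IH(2,1)] by (simp add: add.commute)
  ultimately show ?case
    by (simp add: homogeneous_lincomb)
qed (simp add: homogeneous_letter)

lemma tmul_homogeneous:
  assumes f: "homogeneous f A" and w: "mset w = A + B"
  shows "tmul f g w = f (take (size A) w) * g (drop (size A) w)"
proof -
  have "size A \<le> length w"
    using w by (metis le_add1 size_mset size_union)
  moreover have "f (take k w) = 0" if "k \<le> length w" "k \<noteq> size A" for k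
    using that by (intro homogeneousD[OF f]) (metis length_take min.absorb2 size_mset)
  ultimately show ?thesis
    unfolding tmul_def by (subst sum.remove[of _ "size A"]) (auto intro: sum.neutral)
qed

section \<open>Inversion weights and the symmetrizing form\<close>

lemma prod_lessThan_length_nth: "(\<Prod>i<length u. G (u ! i)) = (\<Prod>x\<in>#mset u. G x)"
  by (induction u) (simp_all add: prod.lessThan_Suc_shift del: prod.lessThan_Suc)

definition involutive_on :: "nat set \<Rightarrow> (nat \<Rightarrow> nat \<Rightarrow> 'a::field) \<Rightarrow> bool" where
  "involutive_on X p \<longleftrightarrow> (\<forall>a\<in>X. \<forall>b\<in>X. p a b * p b a = 1)"

lemma involutive_onD: "involutive_on X p \<Longrightarrow> a \<in> X \<Longrightarrow> b \<in> X \<Longrightarrow> p a b * p b a = 1"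
  unfolding involutive_on_def by blast

lemma involutive_on_nonzero: "involutive_on X p \<Longrightarrow> a \<in> X \<Longrightarrow> b \<in> X \<Longrightarrow> p a b \<noteq> 0"
  using involutive_onD by fastforce

lemma involutive_on_subset: "involutive_on X p \<Longrightarrow> Y \<subseteq> X \<Longrightarrow> involutive_on Y p"
  unfolding involutive_on_def by blast

definition inv_weight :: "(nat \<Rightarrow> nat \<Rightarrow> 'a::field) \<Rightarrow> nat list \<Rightarrow> 'a" where
  "inv_weight p u = (\<Prod>l<length u. \<Prod>k<l. if u ! l < u ! k then p (u ! k) (u ! l) else 1)"

definition cross_weight :: "(nat \<Rightarrow> nat \<Rightarrow> 'a::field) \<Rightarrow> nat multiset \<Rightarrow> nat multiset \<Rightarrow> 'a" where
  "cross_weight p A B = (\<Prod>a\<in>#A. \<Prod>b\<in>#B. if b < a then p a b else 1)"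

definition bichar :: "(nat \<Rightarrow> nat \<Rightarrow> 'a::field) \<Rightarrow> nat multiset \<Rightarrow> nat multiset \<Rightarrow> 'a" where
  "bichar p A B = (\<Prod>a\<in>#A. \<Prod>b\<in>#B. p a b)"

lemma pw_eq_bichar: "pw p u v = bichar p (mset u) (mset v)"
  unfolding pw_def bichar_def prod_lessThan_length_nth[where u = v]
  by (rule prod_lessThan_length_nth)

lemma cross_weight_add_mset_left:
  "cross_weight p (add_mset a A) B = cross_weight p {#a#} B * cross_weight p A B"
  by (simp add: cross_weight_def)

lemma cross_weight_union_right:
  "cross_weight p A (B + C) = cross_weight p A B * cross_weight p A C"
  by (simp add: cross_weight_def prod_mset.distrib)

lemma cross_weight_nonzero:
  assumes "\<forall>a\<in>#A. \<forall>b\<in>#B. p a b \<noteq> 0"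
  shows "cross_weight p A B \<noteq> 0"
  using assms unfolding cross_weight_def by auto

lemma cross_weight_swap:
  assumes "\<forall>a\<in>#A. \<forall>b\<in>#B. a \<noteq> b \<and> p a b * p b a = 1"
  shows "cross_weight p A B = cross_weight p B A * bichar p A B"
proof -
  have "cross_weight p A B = (\<Prod>a\<in>#A. \<Prod>b\<in>#B. (if a < b then p b a else 1) * p a b)"
    unfolding cross_weight_def
    using assms by (intro arg_cong[where f = prod_mset] image_mset_cong) (auto simp: mult.commute)
  also have "\<dots> = (\<Prod>b\<in>#B. \<Prod>a\<in>#A. if a < b then p b a else 1) * bichar p A B"
    unfolding bichar_def prod_mset.distrib by (subst prod_mset.swap) (rule refl)
  finally show ?thesis
    unfolding cross_weight_def .
qed

lemma bichar_swap:
  assumes "\<forall>a\<in>#A. \<forall>b\<in>#B. p a b * p b a = 1"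
  shows "bichar p A B * bichar p B A = 1"
proof -
  have "bichar p A B * bichar p B A = (\<Prod>a\<in>#A. \<Prod>b\<in>#B. p a b * p b a)"
    unfolding bichar_def prod_mset.distrib by (subst (2) prod_mset.swap) (rule refl)
  also have "\<dots> = (\<Prod>a\<in>#A. \<Prod>b\<in>#B. 1)"
    using assms by (intro arg_cong[where f = prod_mset] image_mset_cong) auto
  also have "\<dots> = 1"
    by simp
  finally show ?thesis .
qed

lemma inv_weight_Nil [simp]: "inv_weight p [] = 1"
  by (simp add: inv_weight_def)

lemma inv_weight_Cons: "inv_weight p (a # u) = cross_weight p {#a#} (mset u) * inv_weight p u"
proof -
  have "(\<Prod>l<length u. if u ! l < a then p a (u ! l) else 1) = (\<Prod>b\<in>#mset u. if b < a then p a b else 1)"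
    by (rule prod_lessThan_length_nth)
  then show ?thesis
    unfolding inv_weight_def length_Cons prod.lessThan_Suc_shift nth_Cons_0 nth_Cons_Suc
    by (simp add: prod.distrib cross_weight_def)
qed

lemma inv_weight_append:
  "inv_weight p (u @ v) = inv_weight p u * inv_weight p v * cross_weight p (mset u) (mset v)"
  by (induction u)
    (simp_all add: inv_weight_Cons cross_weight_union_right cross_weight_add_mset_left[of p _ "mset _"]
      cross_weight_def)

lemma inv_weight_nonzero:
  assumes "\<forall>a\<in>set u. \<forall>b\<in>set u. p a b \<noteq> 0"
  shows "inv_weight p u \<noteq> 0"
  using assms unfolding inv_weight_def by auto

definition sym_form :: "(nat \<Rightarrow> nat \<Rightarrow> 'a::field) \<Rightarrow> nat multiset \<Rightarrow> 'a tens \<Rightarrow> 'a" where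
  "sym_form p M f = (\<Sum>u | mset u = M. f u * inv_weight p u)"

lemma finite_lists_with_mset: "finite {u. mset u = M}"
  using ex_mset[of M] mset_eq_finite by metis

lemma sym_form_lincomb:
  "sym_form p M (\<lambda>w. \<Sum>k<(m::nat). c k * g k w) = (\<Sum>k<m. c k * sym_form p M (g k))"
  unfolding sym_form_def
  by (simp add: sum_distrib_left sum_distrib_right mult.assoc sum.swap[of _ "{..<m}"])

lemma sym_form_diff: "sym_form p M (\<lambda>w. f w - g w) = sym_form p M f - sym_form p M g"
  unfolding sym_form_def by (simp add: sum_subtractf algebra_simps)

lemma sym_form_scale: "sym_form p M (\<lambda>w. a * f w) = a * sym_form p M f"
  unfolding sym_form_def by (simp add: sum_distrib_left mult.assoc)

lemma sym_form_lin:
  "sym_form p M (\<lambda>w. a * f w - b * g w) = a * sym_form p M f - b * sym_form p M g"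
  unfolding sym_form_def by (simp add: sum_subtractf sum_distrib_left algebra_simps)

lemma sym_form_singleton: "sym_form p {#a#} f = f [a]"
proof -
  have "{u. mset u = {#a#}} = {[a]}"
    by auto
  then show ?thesis
    unfolding sym_form_def by (simp add: inv_weight_def)
qed

lemma sym_form_tword: "sym_form p (mset w) (tword w) = inv_weight p w"
proof -
  have "sym_form p (mset w) (tword w) = (\<Sum>u | mset u = mset w. if u = w then inv_weight p w else 0)"
    unfolding sym_form_def by (rule sum.cong) (auto simp: tword_def)
  then show ?thesis
    using finite_lists_with_mset[of "mset w"] by simp
qed

lemma sum_mset_eq_union:
  assumes "\<And>w. mset w = A + B \<Longrightarrow> h w \<noteq> 0 \<Longrightarrow> mset (take (size A) w) = A \<and> mset (drop (size A) w) = B"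
  shows "(\<Sum>w | mset w = A + B. h w) = (\<Sum>x\<in>{u. mset u = A} \<times> {v. mset v = B}. h (fst x @ snd x))"
proof -
  let ?U = "{u. mset u = A}" and ?V = "{v. mset v = B}"
  let ?app = "\<lambda>x. fst x @ snd x"
  have "(\<Sum>w | mset w = A + B. h w) = (\<Sum>w\<in>?app ` (?U \<times> ?V). h w)"
  proof (rule sum.mono_neutral_right[OF finite_lists_with_mset])
    show "?app ` (?U \<times> ?V) \<subseteq> {w. mset w = A + B}"
      by auto
    show "\<forall>w\<in>{w. mset w = A + B} - ?app ` (?U \<times> ?V). h w = 0"
    proof
      fix w
      assume w: "w \<in> {w. mset w = A + B} - ?app ` (?U \<times> ?V)"
      show "h w = 0"
      proof (rule ccontr)
        assume "h w \<noteq> 0"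
        then have "mset (take (size A) w) = A" "mset (drop (size A) w) = B"
          using assms w by auto
        then have "w \<in> ?app ` (?U \<times> ?V)"
          by (intro image_eqI[of _ _ "(take (size A) w, drop (size A) w)"]) auto
        then show False
          using w by blast
      qed
    qed
  qed
  moreover have "inj_on ?app (?U \<times> ?V)"
  proof (rule inj_onI)
    fix x y
    assume "x \<in> ?U \<times> ?V" "y \<in> ?U \<times> ?V" "?app x = ?app y"
    then show "x = y"
      by (cases x; cases y) (simp, metis append_eq_append_conv size_mset)
  qed
  ultimately show ?thesis
    by (simp add: sum.reindex comp_def)
qed

lemma sym_form_tmul:
  assumes f: "homogeneous f A" and g: "homogeneous g B"
  shows "sym_form p (A + B) (tmul f g) = cross_weight p A B * sym_form p A f * sym_form p B g"
proof -
  let ?U = "{u. mset u = A}" and ?V = "{v. mset v = B}"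
  let ?h = "\<lambda>w. f (take (size A) w) * g (drop (size A) w) * inv_weight p w"
  have "sym_form p (A + B) (tmul f g) = (\<Sum>w | mset w = A + B. ?h w)"
    unfolding sym_form_def by (rule sum.cong[OF refl]) (simp add: tmul_homogeneous[OF f])
  also have "\<dots> = (\<Sum>x\<in>?U \<times> ?V. ?h (fst x @ snd x))"
    using homogeneousD[OF f] homogeneousD[OF g] by (intro sum_mset_eq_union) auto
  also have "\<dots> = (\<Sum>x\<in>?U \<times> ?V. cross_weight p A B *
      ((f (fst x) * inv_weight p (fst x)) * (g (snd x) * inv_weight p (snd x))))"
  proof (rule sum.cong[OF refl])
    fix x
    assume "x \<in> ?U \<times> ?V"
    then have "size A = length (fst x)" "mset (fst x) = A" "mset (snd x) = B"
      by auto
    then show "?h (fst x @ snd x) = cross_weight p A B *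
        ((f (fst x) * inv_weight p (fst x)) * (g (snd x) * inv_weight p (snd x)))"
      by (simp add: inv_weight_append)
  qed
  also have "\<dots> = cross_weight p A B * (sym_form p A f * sym_form p B g)"
    unfolding sym_form_def sum.cartesian_product' sum_product by (simp add: sum_distrib_left ac_simps)
  also have "\<dots> = cross_weight p A B * sym_form p A f * sym_form p B g"
    by (simp add: mult.assoc)
  finally show ?thesis .
qed

lemma sym_form_homogeneous_other:
  assumes "homogeneous f A" "A \<noteq> M"
  shows "sym_form p M f = 0"
proof -
  have "f u = 0" if "mset u = M" for u
    using homogeneousD[OF assms(1)] that assms(2) by auto
  then show ?thesis
    by (simp add: sym_form_def)
qed

fun rn_factor :: "(nat \<Rightarrow> nat \<Rightarrow> 'a::field) \<Rightarrow> nat list \<Rightarrow> 'a" where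
  "rn_factor p (a # b # zs) = (bichar p {#a#} (mset (b # zs)) - 1) * rn_factor p (b # zs)"
| "rn_factor p _ = 1"

lemma rn_factor_eq_prod:
  "rn_factor p zs = (\<Prod>j<length zs - 1. (\<Prod>l\<in>{j + 1..<length zs}. p (zs ! j) (zs ! l)) - 1)"
proof (induction p zs rule: rn_factor.induct)
  case (1 p a b zs)
  let ?ys = "b # zs"
  define F where "F j = (\<Prod>l\<in>{j + 1..<length (a # ?ys)}. p ((a # ?ys) ! j) ((a # ?ys) ! l)) - 1" for j
  have "F 0 = (\<Prod>l<length ?ys. p a (?ys ! l)) - 1"
    unfolding F_def using prod.shift_bounds_Suc_ivl[of "\<lambda>l. p a ((a # ?ys) ! l)" 0 "length ?ys"]
    by (simp add: atLeast0LessThan)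
  also have "\<dots> = bichar p {#a#} (mset ?ys) - 1"
    unfolding bichar_def using prod_lessThan_length_nth[of "p a" ?ys] by simp
  finally have F0: "F 0 = bichar p {#a#} (mset ?ys) - 1" .
  have FSuc: "F (Suc j) = (\<Prod>l\<in>{j + 1..<length ?ys}. p (?ys ! j) (?ys ! l)) - 1" for j
    unfolding F_def using prod.shift_bounds_Suc_ivl[of "\<lambda>l. p (?ys ! j) ((a # ?ys) ! l)" "j + 1" "length ?ys"]
    by simp
  have "(\<Prod>j<length (a # ?ys) - 1. F j) = F 0 * (\<Prod>j<length ?ys - 1. F (Suc j))"
    using prod.lessThan_Suc_shift[of F "length ?ys - 1"] by simp
  then show ?case
    unfolding F_def[symmetric] F0 FSuc using "1.IH" by simp
qed simp_all

text \<open>Bracketing with a letter \<open>x\<^sub>a\<close> multiplies the form by \<open>p\<^bsub>a,Y\<^esub> - 1\<close>: this is where the factors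
  in condition (3) of the theorem come from.\<close>

lemma sym_form_right_normed:
  assumes "zs \<noteq> []" "distinct zs" "involutive_on (set zs) p"
  shows "\<exists>D. D \<noteq> 0 \<and> sym_form p (mset zs) (evM (right_normed zs)) = D * rn_factor p zs"
  using assms
proof (induction zs rule: right_normed.induct)
  case (2 a)
  then show ?case by (simp add: sym_form_singleton letter_def)
next
  case (3 a b zs)
  let ?ys = "b # zs"
  let ?Y = "mset ?ys"
  let ?u = "evM (right_normed ?ys)"
  let ?c = "cross_weight p ?Y {#a#}"
  have "\<exists>D. D \<noteq> 0 \<and> sym_form p ?Y ?u = D * rn_factor p ?ys"
    by (rule "3.IH") (use "3.prems" in \<open>auto intro: involutive_on_subset\<close>)
  then obtain D where D: "D \<noteq> 0" "sym_form p ?Y ?u = D * rn_factor p ?ys"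
    by blast
  have u: "homogeneous ?u ?Y"
    using homogeneous_evM[of "right_normed ?ys"] by (simp add: leaves_right_normed)
  have disjoint: "\<forall>x\<in>#{#a#}. \<forall>y\<in>#?Y. x \<noteq> y \<and> p x y * p y x = 1"
    using "3.prems" by (auto simp: involutive_on_def)
  have m1: "mset (a # ?ys) = {#a#} + ?Y" and m2: "mset (a # ?ys) = ?Y + {#a#}"
    by simp_all
  have "sym_form p (mset (a # ?ys)) (evM (right_normed (a # ?ys)))
      = sym_form p ({#a#} + ?Y) (tmul (letter a) ?u) - sym_form p (?Y + {#a#}) (tmul ?u (letter a))"
    unfolding right_normed.simps evM.simps sym_form_diff by (simp only: m1[symmetric] m2[symmetric])
  also have "\<dots> = cross_weight p {#a#} ?Y * sym_form p ?Y ?u - ?c * sym_form p ?Y ?u"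
    unfolding sym_form_tmul[OF homogeneous_letter u] sym_form_tmul[OF u homogeneous_letter]
      sym_form_singleton by (simp add: letter_def)
  also have "\<dots> = (?c * D) * rn_factor p (a # ?ys)"
    unfolding cross_weight_swap[OF disjoint] D(2) by (simp add: algebra_simps)
  finally have "sym_form p (mset (a # ?ys)) (evM (right_normed (a # ?ys))) = (?c * D) * rn_factor p (a # ?ys)" .
  moreover have "?c \<noteq> 0"
    using involutive_on_nonzero[OF "3.prems"(3)] by (intro cross_weight_nonzero) simp
  ultimately show ?case
    using D(1) by (intro exI[of _ "?c * D"]) simp
qed simp

lemma sym_form_evL:
  assumes "distinct (leaves t)" "involutive_on (set (leaves t)) p"
  shows "sym_form p (mset (leaves t)) (evL p t) = (-1) ^ size t * sym_form p (mset (leaves t)) (evM t)"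
  using assms
proof (induction t)
  case (Node s t)
  let ?S = "mset (leaves s)" and ?T = "mset (leaves t)"
  let ?c = "cross_weight p ?T ?S" and ?a = "bichar p ?S ?T" and ?b = "bichar p ?T ?S"
  have IHs: "sym_form p ?S (evL p s) = (-1) ^ size s * sym_form p ?S (evM s)"
    using Node by (auto intro: involutive_on_subset)
  have IHt: "sym_form p ?T (evL p t) = (-1) ^ size t * sym_form p ?T (evM t)"
    using Node by (auto intro: involutive_on_subset)
  have disjoint: "\<forall>x\<in>#?S. \<forall>y\<in>#?T. x \<noteq> y \<and> p x y * p y x = 1"
    using Node.prems by (auto simp: involutive_on_def)
  then have ab: "?a * ?b = 1"
    by (intro bichar_swap) auto
  have cross: "cross_weight p ?S ?T = ?c * ?a"
    using cross_weight_swap[OF disjoint] .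
  have "sym_form p (mset (leaves (Node s t))) (evL p (Node s t))
      = ?b * sym_form p (?S + ?T) (tmul (evL p s) (evL p t))
        - ?a * sym_form p (?T + ?S) (tmul (evL p t) (evL p s))"
    by (simp add: sym_form_lin pw_eq_bichar add.commute)
  then have L: "sym_form p (mset (leaves (Node s t))) (evL p (Node s t))
      = ?b * (cross_weight p ?S ?T * sym_form p ?S (evL p s) * sym_form p ?T (evL p t))
        - ?a * (?c * sym_form p ?T (evL p t) * sym_form p ?S (evL p s))"
    by (simp add: sym_form_tmul homogeneous_evL)
  have "sym_form p (mset (leaves (Node s t))) (evM (Node s t))
      = sym_form p (?S + ?T) (tmul (evM s) (evM t)) - sym_form p (?T + ?S) (tmul (evM t) (evM s))"
    by (simp add: sym_form_diff add.commute)
  then have M: "sym_form p (mset (leaves (Node s t))) (evM (Node s t))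
      = cross_weight p ?S ?T * sym_form p ?S (evM s) * sym_form p ?T (evM t)
        - ?c * sym_form p ?T (evM t) * sym_form p ?S (evM s)"
    by (simp add: sym_form_tmul homogeneous_evM)
  define \<sigma>s where "\<sigma>s = (-1 :: 'a) ^ size s"
  define \<sigma>t where "\<sigma>t = (-1 :: 'a) ^ size t"
  have sign: "(-1 :: 'a) ^ size (Node s t) = - (\<sigma>s * \<sigma>t)"
    by (simp add: \<sigma>s_def \<sigma>t_def power_add)
  show ?case
    unfolding L M IHs IHt cross sign \<sigma>s_def[symmetric] \<sigma>t_def[symmetric] using ab by algebra
qed simp

section \<open>The quantum symmetrizer\<close>

definition sym_perms :: "nat \<Rightarrow> nat list \<Rightarrow> nat list \<Rightarrow> (nat \<Rightarrow> nat) set" where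
  "sym_perms m u w = {\<sigma>. \<sigma> permutes {..<m} \<and> perm_word u \<sigma> = w}"

lemma perm_word_eq_permute_list: "perm_word u \<sigma> = permute_list \<sigma> u"
  by (simp add: perm_word_def permute_list_def)

lemma sym_perms_iff: "\<sigma> \<in> sym_perms m u w \<longleftrightarrow> \<sigma> permutes {..<m} \<and> permute_list \<sigma> u = w"
  by (simp add: sym_perms_def perm_word_eq_permute_list)

lemma symm_eq_sum_mset_eq:
  assumes "length w = m" "set w \<subseteq> {..<n}"
  shows "symm n p m f w = (\<Sum>u | mset u = mset w. f u * (\<Sum>\<sigma>\<in>sym_perms m u w. sym_coef p u \<sigma>))"
proof -
  let ?U = "{u. length u = m \<and> set u \<subseteq> {..<n}}"
  have "{u. mset u = mset w} \<subseteq> ?U"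
    using assms by (auto dest: mset_eq_length simp flip: set_mset_mset)
  moreover have "finite ?U"
    using finite_lists_length_eq[of "{..<n}" m] by (simp add: conj_commute)
  moreover have "sym_perms m u w = {}" if "mset u \<noteq> mset w" "length u = m" for u
    using that by (auto simp: sym_perms_iff)
  ultimately show ?thesis
    unfolding symm_def sym_perms_def[symmetric] by (intro sum.mono_neutral_right) auto
qed

lemma sym_coef_pairs:
  "sym_coef p w \<tau> = (\<Prod>(l, k)\<in>(SIGMA l:{..<length w}. {..<l}). if \<tau> l < \<tau> k then p (w ! \<tau> l) (w ! \<tau> k) else 1)"
  unfolding sym_coef_def by (subst prod.Sigma) auto

lemma bij_betw_sort_image_pair:
  fixes m :: nat
  assumes s: "s permutes {..<m}"
  shows "bij_betw (\<lambda>(l, k). (max (s l) (s k), min (s l) (s k)))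
    (SIGMA l:{..<m}. {..<l}) (SIGMA l:{..<m}. {..<l})"
proof -
  let ?Q = "SIGMA l:{..<m}. {..<l}" and ?\<phi> = "\<lambda>(l, k). (max (s l) (s k), min (s l) (s k))"
  have s_lt: "s x < m" if "x < m" for x
    using permutes_in_image[OF s] that by simp
  have s_inj: "s x = s y \<longleftrightarrow> x = y" for x y
    using permutes_inj[OF s] by (auto dest: injD)
  have "?\<phi> x \<in> ?Q" if "x \<in> ?Q" for x
  proof -
    obtain l k where x: "x = (l, k)" "k < l" "l < m"
      using \<open>x \<in> ?Q\<close> by auto
    have "k < m"
      using x(2,3) by linarith
    then have "s l \<noteq> s k" "s l < m" "s k < m"
      using x s_inj s_lt by auto
    then show ?thesis
      unfolding x by (auto simp: max_def min_def)
  qed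
  then have "?\<phi> ` ?Q \<subseteq> ?Q"
    by blast
  moreover have "inj_on ?\<phi> ?Q"
  proof (rule inj_onI)
    fix x y
    assume "x \<in> ?Q" "y \<in> ?Q" "?\<phi> x = ?\<phi> y"
    then show "x = y"
      using s_inj by (cases x; cases y) (auto simp: max_def min_def split: if_splits)
  qed
  ultimately show ?thesis
    using endo_inj_surj[of ?Q ?\<phi>] unfolding bij_betw_def by auto
qed

text \<open>The braiding coefficients form a cocycle as soon as the braiding is involutive: a pair of
  positions that is inverted by \<open>\<sigma>\<close> and again by \<open>s\<close> contributes \<open>p\<^sub>a\<^sub>b p\<^sub>b\<^sub>a = 1\<close>.\<close>

lemma sym_coef_compose:
  assumes \<sigma>: "\<sigma> permutes {..<length u}" and s: "s permutes {..<length u}"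
    and H: "involutive_on (set u) p"
  shows "sym_coef p u (\<sigma> \<circ> s) = sym_coef p u \<sigma> * sym_coef p (permute_list \<sigma> u) s"
proof -
  define m where "m = length u"
  define v where "v = permute_list \<sigma> u"
  define Q where "Q = (SIGMA l:{..<m}. {..<l})"
  define \<phi> where "\<phi> = (\<lambda>(l::nat, k::nat). (max (s l) (s k), min (s l) (s k)))"
  define g where "g = (\<lambda>(y, x). if \<sigma> y < \<sigma> x then p (v ! y) (v ! x) else 1)"
  have lv: "length v = m"
    by (simp add: v_def m_def)
  have v_nth: "v ! x = u ! \<sigma> x" if "x < m" for x
    unfolding v_def using permute_list_nth[OF \<sigma>] that m_def by simp
  have s_lt: "s x < m" if "x < m" for x
    using permutes_in_image[OF s] that m_def by simp
  have s_inj: "s x = s y \<longleftrightarrow> x = y" for x y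
    using permutes_inj[OF s] by (auto dest: injD)
  have \<sigma>_inj: "\<sigma> x = \<sigma> y \<longleftrightarrow> x = y" for x y
    using permutes_inj[OF \<sigma>] by (auto dest: injD)
  have v_inv: "p (v ! x) (v ! y) * p (v ! y) (v ! x) = 1" if "x < m" "y < m" for x y
  proof -
    have "set v = set u"
      unfolding v_def by (metis mset_permute_list[OF \<sigma>] set_mset_mset)
    moreover have "v ! x \<in> set v" "v ! y \<in> set v"
      using that by (simp_all add: v_def m_def)
    ultimately show ?thesis
      using involutive_onD[OF H] by simp
  qed
  have factor: "(if \<sigma> (s l) < \<sigma> (s k) then p (v ! s l) (v ! s k) else 1)
      = g (\<phi> (l, k)) * (if s l < s k then p (v ! s l) (v ! s k) else 1)" if "(l, k) \<in> Q" for l k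
  proof -
    have "s l \<noteq> s k" "s l < m" "s k < m"
      using that s_inj s_lt unfolding Q_def by auto
    then show ?thesis
      using v_inv[of "s k" "s l"] \<sigma>_inj[of "s l" "s k"]
      unfolding \<phi>_def g_def by (auto simp: max_def min_def)
  qed
  have "sym_coef p u (\<sigma> \<circ> s) = (\<Prod>(l, k)\<in>Q. if \<sigma> (s l) < \<sigma> (s k) then p (v ! s l) (v ! s k) else 1)"
    unfolding sym_coef_pairs Q_def m_def[symmetric] by (rule prod.cong[OF refl]) (auto simp: v_nth s_lt)
  also have "\<dots> = (\<Prod>x\<in>Q. g (\<phi> x)) * sym_coef p v s"
    unfolding sym_coef_pairs Q_def lv prod.distrib[symmetric]
    by (rule prod.cong[OF refl]) (auto simp: factor[unfolded Q_def])
  also have "(\<Prod>x\<in>Q. g (\<phi> x)) = prod g Q"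
    by (rule prod.reindex_bij_betw) (use bij_betw_sort_image_pair[OF s] in \<open>simp add: \<phi>_def Q_def m_def\<close>)
  also have "prod g Q = sym_coef p u \<sigma>"
    unfolding sym_coef_pairs Q_def m_def g_def by (rule prod.cong[OF refl]) (auto simp: v_nth[unfolded m_def])
  finally show ?thesis
    unfolding v_def .
qed

lemma sym_coef_nonzero:
  assumes "\<forall>a\<in>set u. \<forall>b\<in>set u. p a b \<noteq> 0" "\<sigma> permutes {..<length u}"
  shows "sym_coef p u \<sigma> \<noteq> 0"
  using assms permutes_in_image[OF assms(2)] unfolding sym_coef_def
  by (auto split: if_splits)

lemma sym_coef_sorted_inv_weight:
  assumes sorted: "sorted_wrt (<) w" and r: "r permutes {..<length w}"
    and H: "involutive_on (set w) p"
  shows "sym_coef p w r * inv_weight p (permute_list r w) = 1"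
proof -
  let ?m = "length w" and ?v = "permute_list r w"
  have v_nth: "?v ! x = w ! r x" if "x < ?m" for x
    using permute_list_nth[OF r] that by simp
  have r_lt: "r x < ?m" if "x < ?m" for x
    using permutes_in_image[OF r] that by simp
  have w_less_iff: "w ! i < w ! j \<longleftrightarrow> i < j" if "i < ?m" "j < ?m" for i j
    using sorted_wrt_nth_less[OF sorted] that by (metis less_asym linorder_neqE_nat)
  have "(if r l < r k then p (w ! r l) (w ! r k) else 1)
      * (if ?v ! l < ?v ! k then p (?v ! k) (?v ! l) else 1) = 1" if "k < l" "l < ?m" for k l
    using that r_lt involutive_onD[OF H nth_mem nth_mem, of "r l" "r k"]
    by (simp add: v_nth w_less_iff)
  then have "sym_coef p w r * inv_weight p ?v = (\<Prod>l<?m. \<Prod>k<l. (1 :: 'a))"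
    unfolding sym_coef_def inv_weight_def length_permute_list prod.distrib[symmetric]
    by (intro prod.cong refl) simp
  then show ?thesis
    by simp
qed

text \<open>Reduce to the sorted word with the cocycle identity.\<close>

lemma sym_coef_inv_weight:
  assumes distinct: "distinct u" and \<sigma>: "\<sigma> permutes {..<length u}"
    and H: "involutive_on (set u) p"
  shows "sym_coef p u \<sigma> * inv_weight p (permute_list \<sigma> u) = inv_weight p u"
proof -
  define w where "w = sort u"
  have sorted: "sorted_wrt (<) w"
    unfolding w_def strict_sorted_iff using distinct by simp
  have mset_w: "mset u = mset w" and length_w: "length w = length u" and set_w: "set w = set u"
    unfolding w_def by simp_all
  obtain r where r: "r permutes {..<length w}" "permute_list r w = u"
    using mset_eq_permutation[OF mset_w] by blast
  have Hw: "involutive_on (set w) p"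
    using H set_w by simp
  have \<sigma>w: "\<sigma> permutes {..<length w}"
    using \<sigma> length_w by simp
  have compose: "sym_coef p w (r \<circ> \<sigma>) = sym_coef p w r * sym_coef p u \<sigma>"
    using sym_coef_compose[OF r(1) \<sigma>w Hw] r(2) by simp
  have "sym_coef p w (r \<circ> \<sigma>) * inv_weight p (permute_list \<sigma> u) = 1"
    using sym_coef_sorted_inv_weight[OF sorted permutes_compose[OF \<sigma>w r(1)] Hw]
      permute_list_compose[OF \<sigma>w, of r] r(2) by simp
  moreover have r_inv: "sym_coef p w r * inv_weight p u = 1"
    using sym_coef_sorted_inv_weight[OF sorted r(1) Hw] r(2) by simp
  ultimately have "sym_coef p w r * (sym_coef p u \<sigma> * inv_weight p (permute_list \<sigma> u))
      = sym_coef p w r * inv_weight p u"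
    unfolding compose by (simp add: mult.assoc)
  moreover have "sym_coef p w r \<noteq> 0"
    using r_inv by auto
  ultimately show ?thesis
    by simp
qed

lemma sym_perms_distinct:
  assumes distinct: "distinct w" and mset_u: "mset u = mset w" and length_w: "length w = m"
  obtains \<sigma> where "sym_perms m u w = {\<sigma>}" "\<sigma> permutes {..<length u}" "permute_list \<sigma> u = w"
proof -
  have length_u: "length u = m"
    using mset_u length_w by (metis size_mset)
  have distinct_u: "distinct u"
    using distinct mset_u mset_eq_imp_distinct_iff by blast
  obtain \<sigma> where \<sigma>: "\<sigma> permutes {..<length u}" "permute_list \<sigma> u = w"
    using mset_eq_permutation[OF mset_u[symmetric]] by blast
  have unique: "\<tau> = \<sigma>" if \<tau>: "\<tau> permutes {..<length u}" "permute_list \<tau> u = w" for \<tau>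
  proof
    fix x
    show "\<tau> x = \<sigma> x"
    proof (cases "x < length u")
      case True
      then have "u ! \<tau> x = u ! \<sigma> x" "\<tau> x < length u" "\<sigma> x < length u"
        using permute_list_nth[OF \<tau>(1)] permute_list_nth[OF \<sigma>(1)] \<tau>(2) \<sigma>(2)
          permutes_in_image[OF \<tau>(1)] permutes_in_image[OF \<sigma>(1)] by auto
      then show ?thesis
        using nth_eq_iff_index_eq[OF distinct_u] by blast
    next
      case False
      then show ?thesis
        using permutes_not_in[OF \<tau>(1)] permutes_not_in[OF \<sigma>(1)] by simp
    qed
  qed
  have "sym_perms m u w = {\<sigma>}"
  proof
    show "sym_perms m u w \<subseteq> {\<sigma>}"
      using unique length_u by (auto simp: sym_perms_iff)
    show "{\<sigma>} \<subseteq> sym_perms m u w"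
      using \<sigma> length_u by (simp add: sym_perms_iff)
  qed
  then show ?thesis
    using that \<sigma> by blast
qed

lemma symm_distinct_word:
  assumes distinct: "distinct w" and length_w: "length w = m" and set_w: "set w \<subseteq> {..<n}"
    and H: "involutive_on (set w) p"
  shows "symm n p m f w = sym_form p (mset w) f / inv_weight p w"
proof -
  have "inv_weight p w \<noteq> 0"
    using involutive_on_nonzero[OF H] by (intro inv_weight_nonzero) blast
  have "(\<Sum>\<sigma>\<in>sym_perms m u w. sym_coef p u \<sigma>) = inv_weight p u / inv_weight p w"
    if u: "mset u = mset w" for u
  proof -
    obtain \<sigma> where \<sigma>: "sym_perms m u w = {\<sigma>}" "\<sigma> permutes {..<length u}" "permute_list \<sigma> u = w"
      using sym_perms_distinct[OF distinct u length_w] .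
    have "distinct u" "set u = set w"
      using distinct u by (metis mset_eq_imp_distinct_iff, metis set_mset_mset)
    then have "sym_coef p u \<sigma> * inv_weight p w = inv_weight p u"
      using sym_coef_inv_weight[OF _ \<sigma>(2)] \<sigma>(3) H by simp
    then show ?thesis
      using \<sigma>(1) \<open>inv_weight p w \<noteq> 0\<close> by (simp add: field_simps)
  qed
  then show ?thesis
    unfolding symm_eq_sum_mset_eq[OF length_w set_w] sym_form_def
    by (simp add: sum_divide_distrib)
qed

lemma sorted_distinct_adj_imp_distinct: "sorted xs \<Longrightarrow> distinct_adj xs \<Longrightarrow> distinct xs"
proof (induction xs rule: induct_list012)
  case (3 x y zs)
  then have "x < y" "\<forall>z\<in>set zs. y \<le> z" "distinct (y # zs)"
    by auto
  then show ?case
    by fastforce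
qed simp_all

lemma sym_coef_adjacent_transpose:
  assumes "Suc x < length v" "v ! x = v ! Suc x"
  shows "sym_coef p v (Transposition.transpose x (Suc x)) = p (v ! x) (v ! x)"
proof -
  let ?t = "Transposition.transpose x (Suc x)"
  have "sym_coef p v ?t = (\<Prod>l<length v. \<Prod>k<l. if l = Suc x \<and> k = x then p (v ! x) (v ! x) else 1)"
    unfolding sym_coef_def using assms(2) by (intro prod.cong refl) (auto simp: transpose_def)
  also have "\<dots> = (\<Prod>l<length v. if l = Suc x then p (v ! x) (v ! x) else 1)"
    by (intro prod.cong refl) (auto simp: if_distrib cong: if_cong)
  also have "\<dots> = p (v ! x) (v ! x)"
    using assms(1) by simp
  finally show ?thesis .
qed

lemma sum_sym_coef_permute_target:
  assumes r: "r permutes {..<m}" and "length u = m" "length w = m"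
    and H: "involutive_on (set u) p"
  shows "(\<Sum>\<sigma>\<in>sym_perms m u (permute_list r w). sym_coef p u \<sigma>)
    = sym_coef p w r * (\<Sum>\<sigma>\<in>sym_perms m u w. sym_coef p u \<sigma>)"
  unfolding sum_distrib_left
proof (rule sum.reindex_bij_witness[where i = "\<lambda>\<tau>. \<tau> \<circ> inv r" and j = "\<lambda>\<sigma>. \<sigma> \<circ> r", symmetric])
  have r_inv: "inv r permutes {..<m}"
    using permutes_inv[OF r] .
  fix \<sigma>
  assume "\<sigma> \<in> sym_perms m u w"
  then have \<sigma>: "\<sigma> permutes {..<m}" "permute_list \<sigma> u = w"
    by (simp_all add: sym_perms_iff)
  show "\<sigma> \<circ> r \<circ> inv r = \<sigma>"
    using permutes_inv_o(1)[OF r] by (simp add: comp_assoc)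
  show "\<sigma> \<circ> r \<in> sym_perms m u (permute_list r w)"
    using \<sigma> permute_list_compose[of r u \<sigma>] r assms(2) permutes_compose[OF r \<sigma>(1)]
    by (simp add: sym_perms_iff)
  show "sym_coef p u (\<sigma> \<circ> r) = sym_coef p w r * sym_coef p u \<sigma>"
    using sym_coef_compose[of \<sigma> u r p] \<sigma> r assms(2) H by (simp add: mult.commute)
next
  fix \<tau>
  assume "\<tau> \<in> sym_perms m u (permute_list r w)"
  then have \<tau>: "\<tau> permutes {..<m}" "permute_list \<tau> u = permute_list r w"
    by (simp_all add: sym_perms_iff)
  have r_inv: "inv r permutes {..<m}"
    using permutes_inv[OF r] .
  show "\<tau> \<circ> inv r \<circ> r = \<tau>"
    using permutes_inv_o(2)[OF r] by (simp add: comp_assoc)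
  have "permute_list (\<tau> \<circ> inv r) u = permute_list (r \<circ> inv r) w"
    using permute_list_compose[of "inv r" u \<tau>] permute_list_compose[of "inv r" w r] r_inv assms(2,3) \<tau>
    by simp
  then show "\<tau> \<circ> inv r \<in> sym_perms m u w"
    using permutes_inv_o(1)[OF r] permutes_compose[OF r_inv \<tau>(1)]
    by (simp add: sym_perms_iff)
qed

text \<open>Swapping the two equal letters pairs off the terms of the sum with opposite signs.\<close>

lemma sum_sym_coef_adjacent_repeat:
  fixes p :: "nat \<Rightarrow> nat \<Rightarrow> 'a::field_char_0"
  assumes x: "Suc x < length v" "v ! x = v ! Suc x" and minus_one: "p (v ! x) (v ! x) = -1"
    and length_u: "length u = m" and length_v: "length v = m" and H: "involutive_on (set u) p"
  shows "(\<Sum>\<sigma>\<in>sym_perms m u v. sym_coef p u \<sigma>) = 0"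
proof -
  let ?t = "Transposition.transpose x (Suc x)"
  have t: "?t permutes {..<m}"
    using x length_v by (intro permutes_swap_id) auto
  have "permute_list ?t v = v"
    using x by (intro nth_equalityI) (auto simp: permute_list_nth[OF t[folded length_v]] transpose_def)
  moreover have "sym_coef p v ?t = -1"
    using sym_coef_adjacent_transpose[OF x, of p] minus_one by simp
  ultimately have "(\<Sum>\<sigma>\<in>sym_perms m u v. sym_coef p u \<sigma>) = - (\<Sum>\<sigma>\<in>sym_perms m u v. sym_coef p u \<sigma>)"
    using sum_sym_coef_permute_target[OF t length_u length_v H] by simp
  then show ?thesis
    by simp
qed

lemma sum_sym_coef_repeated_letter:
  fixes p :: "nat \<Rightarrow> nat \<Rightarrow> 'a::field_char_0"
  assumes repeated: "\<not> distinct u" and length_u: "length u = m"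
    and H: "involutive_on (set u) p" and minus_one: "\<forall>a\<in>set u. p a a = -1"
  shows "(\<Sum>\<sigma>\<in>sym_perms m u w. sym_coef p u \<sigma>) = 0"
proof (cases "mset w = mset u")
  case False
  then have "sym_perms m u w = {}"
    using length_u by (auto simp: sym_perms_iff)
  then show ?thesis
    by simp
next
  case True
  have length_w: "length w = m" and set_w: "set w = set u"
    using True length_u by (metis size_mset, metis set_mset_mset)
  define v where "v = sort w"
  obtain r where r: "r permutes {..<m}" "permute_list r w = v"
    using mset_eq_permutation[of v w] length_w by (auto simp: v_def)
  have length_v: "length v = m" and set_v: "set v = set u"
    using length_w set_w by (simp_all add: v_def)
  have "\<not> distinct_adj v"
    using sorted_distinct_adj_imp_distinct[of v] repeated True
    by (auto simp: v_def mset_eq_imp_distinct_iff[of w u])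
  then obtain x where x: "Suc x < length v" "v ! x = v ! Suc x"
    unfolding distinct_adj_conv_nth by blast
  have "p (v ! x) (v ! x) = -1"
    using minus_one x set_v by (metis nth_mem)
  then have "(\<Sum>\<sigma>\<in>sym_perms m u v. sym_coef p u \<sigma>) = 0"
    using sum_sym_coef_adjacent_repeat[OF x _ length_u length_v H] by blast
  moreover have "(\<Sum>\<sigma>\<in>sym_perms m u v. sym_coef p u \<sigma>)
      = sym_coef p w r * (\<Sum>\<sigma>\<in>sym_perms m u w. sym_coef p u \<sigma>)"
    using sum_sym_coef_permute_target[OF r(1) length_u length_w H] r(2) by simp
  moreover have "sym_coef p w r \<noteq> 0"
    using involutive_on_nonzero[OF H] r(1) length_w set_w by (intro sym_coef_nonzero) auto
  ultimately show ?thesis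
    by simp
qed

lemma permutations_lessThan_2: "{\<sigma>. \<sigma> permutes {..<2::nat}} = {id, Transposition.transpose 0 1}"
proof -
  have two: "{..<2::nat} = insert 0 {1}"
    by auto
  have "{\<sigma>. \<sigma> permutes {..<2::nat}} = (\<lambda>(b, \<sigma>). Transposition.transpose 0 b \<circ> \<sigma>) `
      {(b, \<sigma>). b \<in> insert 0 {1} \<and> \<sigma> \<in> {\<sigma>. \<sigma> permutes {1}}}"
    unfolding two by (rule permutes_insert)
  also have "{(b, \<sigma>). b \<in> insert (0::nat) {1} \<and> \<sigma> \<in> {\<sigma>. \<sigma> permutes {1::nat}}} = {(0, id), (1, id)}"
    by auto
  finally show ?thesis
    by simp
qed
lemma transpose_01_ne_id: "Transposition.transpose 0 (1::nat) \<noteq> id"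
proof
  assume "Transposition.transpose 0 (1::nat) = id"
  then have "Transposition.transpose 0 (1::nat) 0 = id 0"
    by simp
  then show False
    by simp
qed
lemma sum_sym_perms_2:
  "(\<Sum>\<sigma>\<in>sym_perms 2 u w. g \<sigma>) = (if u = w then g id else 0)
    + (if permute_list (Transposition.transpose 0 1) u = w then g (Transposition.transpose 0 1) else 0)"
proof -
  have "sym_perms 2 u w = {\<sigma> \<in> {id, Transposition.transpose 0 1}. permute_list \<sigma> u = w}"
    unfolding sym_perms_def perm_word_eq_permute_list permutations_lessThan_2[symmetric] by simp
  then have "(\<Sum>\<sigma>\<in>sym_perms 2 u w. g \<sigma>)
      = (\<Sum>\<sigma>\<in>{id, Transposition.transpose 0 1}. if permute_list \<sigma> u = w then g \<sigma> else 0)"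
    by (simp only: sum.inter_filter[OF finite.insertI[OF finite.insertI[OF finite.emptyI]]])
  then show ?thesis
    using transpose_01_ne_id by simp
qed

lemma permute_list_transpose_01: "permute_list (Transposition.transpose 0 1) [a, b] = [b, a]"
  by (simp add: permute_list_def transpose_def numeral_2_eq_2 upt_rec)

lemma sym_coef_transpose_01: "sym_coef p [a, b] (Transposition.transpose 0 1) = p a b"
  by (simp add: sym_coef_def transpose_def numeral_2_eq_2 lessThan_Suc)

lemma sym_coef_id: "sym_coef p u id = 1"
  by (simp add: sym_coef_def)

lemma symm_pair:
  assumes "i \<noteq> j" "i < n" "j < n"
  shows "symm n p 2 f [i, j] = f [i, j] + f [j, i] * p j i"
proof -
  have words: "{u. mset u = mset [i, j]} = {[i, j], [j, i]}"
    by (rule set_eqI) (simp only: mem_Collect_eq mset_eq_pair_iff insert_iff empty_iff simp_thms)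
  have same: "(\<Sum>\<sigma>\<in>sym_perms 2 [i, j] [i, j]. sym_coef p [i, j] \<sigma>) = 1"
    unfolding sum_sym_perms_2 permute_list_transpose_01 sym_coef_id using assms(1) by simp
  have swapped: "(\<Sum>\<sigma>\<in>sym_perms 2 [j, i] [i, j]. sym_coef p [j, i] \<sigma>) = p j i"
    unfolding sum_sym_perms_2 permute_list_transpose_01 sym_coef_transpose_01 using assms(1) by simp
  show ?thesis
    using symm_eq_sum_mset_eq[of "[i, j]" 2 n p f] assms unfolding words
    by (simp add: same swapped)
qed

lemma symm_square:
  assumes "i < n"
  shows "symm n p 2 f [i, i] = f [i, i] * (1 + p i i)"
proof -
  have words: "{u. mset u = mset [i, i]} = {[i, i]}"
    by (rule set_eqI) (simp only: mem_Collect_eq mset_eq_pair_iff insert_iff empty_iff simp_thms)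
  have "(\<Sum>\<sigma>\<in>sym_perms 2 [i, i] [i, i]. sym_coef p [i, i] \<sigma>) = 1 + p i i"
    unfolding sum_sym_perms_2 permute_list_transpose_01 sym_coef_id sym_coef_transpose_01 by simp
  then show ?thesis
    using symm_eq_sum_mset_eq[of "[i, i]" 2 n p f] assms unfolding words by simp
qed

section \<open>Membership in the Nichols ideal\<close>

lemma in_T_lincomb:
  assumes "in_T n f" "in_T n g"
  shows "in_T n (\<lambda>w. a * f w + b * g w)"
proof -
  have "{w. a * f w + b * g w \<noteq> 0} \<subseteq> {w. f w \<noteq> 0} \<union> {w. g w \<noteq> 0}"
    by auto
  then show ?thesis
    using assms unfolding in_T_def by (auto intro: finite_subset)
qed

lemma in_T_tword: "set w \<subseteq> {..<n} \<Longrightarrow> in_T n (tword w)"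
  unfolding in_T_def tword_def by simp

lemma nichols_ideal_lincomb:
  assumes "f \<in> nichols_ideal n p" "g \<in> nichols_ideal n p"
  shows "(\<lambda>w. a * f w + b * g w) \<in> nichols_ideal n p"
proof -
  have "symm n p m (comp m (\<lambda>w. a * f w + b * g w))
      = (\<lambda>w. a * symm n p m (comp m f) w + b * symm n p m (comp m g) w)" for m
    unfolding symm_def comp_def by (auto simp: sum.distrib sum_distrib_left algebra_simps)
  then show ?thesis
    using assms unfolding nichols_ideal_def by (simp add: in_T_lincomb)
qed

lemma zero_in_nichols_ideal: "(\<lambda>w. 0) \<in> nichols_ideal n p"
  unfolding nichols_ideal_def in_T_def symm_def comp_def by simp

lemma symm_homogeneous_other:
  assumes g: "homogeneous g M" and w: "mset w \<noteq> M"
  shows "symm n p m g w = 0"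
  unfolding symm_def sym_perms_def[symmetric]
proof (rule sum.neutral, intro ballI)
  fix u
  assume "u \<in> {u. length u = m \<and> set u \<subseteq> {..<n}}"
  then have "sym_perms m u w = {}" if "mset u = M"
    using that w by (auto simp: sym_perms_iff)
  then show "g u * (\<Sum>\<sigma>\<in>sym_perms m u w. sym_coef p u \<sigma>) = 0"
    using homogeneousD[OF g] by (cases "mset u = M") auto
qed

lemma homogeneous_in_nichols_idealI:
  assumes g: "homogeneous g M" and size: "size M \<ge> 2" and letters: "set_mset M \<subseteq> {..<n}"
    and symm: "\<And>w. mset w = M \<Longrightarrow> symm n p (size M) g w = 0"
  shows "g \<in> nichols_ideal n p"
proof -
  have length: "length u = size M" if "g u \<noteq> 0" for u
    using homogeneousD[OF g] that by (metis size_mset)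
  have "{u. g u \<noteq> 0} \<subseteq> {u. mset u = M}"
    using homogeneousD[OF g] by blast
  then have "in_T n g"
    unfolding in_T_def using finite_lists_with_mset[of M] letters homogeneousD[OF g]
    by (auto intro: finite_subset simp flip: set_mset_mset)
  moreover have "g u = 0" if "length u < 2" for u
    using length that size by fastforce
  moreover have "symm n p m (comp m g) = (\<lambda>_. 0)" for m
  proof (cases "m = size M")
    case True
    then have "comp m g = g"
      unfolding comp_def using length by fastforce
    then show ?thesis
      using symm symm_homogeneous_other[OF g] True by fastforce
  next
    case False
    then have "comp m g = (\<lambda>_. 0)"
      unfolding comp_def using length by fastforce
    then show ?thesis
      by (simp add: symm_def)
  qed
  ultimately show ?thesis
    unfolding nichols_ideal_def by auto
qed

lemma distinct_homogeneous_in_nichols_ideal: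
  assumes distinct: "distinct w" and length: "length w \<ge> 2" and letters: "set w \<subseteq> {..<n}"
    and H: "involutive_on (set w) p"
    and g: "homogeneous g (mset w)" and form: "sym_form p (mset w) g = 0"
  shows "g \<in> nichols_ideal n p"
proof (rule homogeneous_in_nichols_idealI[OF g])
  fix w'
  assume w': "mset w' = mset w"
  then have "distinct w'" "length w' = size (mset w)" "set w' = set w"
    using distinct by (metis mset_eq_imp_distinct_iff, metis size_mset, metis set_mset_mset)
  then show "symm n p (size (mset w)) g w' = 0"
    using symm_distinct_word[of w' "size (mset w)" n p g] letters H w' form by simp
qed (use length letters in auto)

lemma repeated_tword_in_nichols_ideal:
  fixes p :: "nat \<Rightarrow> nat \<Rightarrow> 'a::field_char_0"
  assumes repeated: "\<not> distinct w" and length: "length w \<ge> 2" and letters: "set w \<subseteq> {..<n}"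
    and H: "involutive_on (set w) p" and minus_one: "\<forall>a\<in>set w. p a a = -1"
  shows "tword w \<in> nichols_ideal n p"
proof (rule homogeneous_in_nichols_idealI[OF homogeneous_tword])
  fix w'
  assume w': "mset w' = mset w"
  then have "length w' = length w" "set w' \<subseteq> {..<n}"
    using letters by (metis size_mset, metis set_mset_mset)
  then have "symm n p (length w) (tword w) w'
      = (\<Sum>u | mset u = mset w. tword w u * (\<Sum>\<sigma>\<in>sym_perms (length w) u w'. sym_coef p u \<sigma>))"
    by (simp add: symm_eq_sum_mset_eq w')
  also have "\<dots> = (\<Sum>u | mset u = mset w.
      if u = w then (\<Sum>\<sigma>\<in>sym_perms (length w) w w'. sym_coef p w \<sigma>) else 0)"
    by (rule sum.cong) (auto simp: tword_def)
  also have "\<dots> = (\<Sum>\<sigma>\<in>sym_perms (length w) w w'. sym_coef p w \<sigma>)"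
    using finite_lists_with_mset[of "mset w"] by simp
  also have "\<dots> = 0"
    using sum_sym_coef_repeated_letter[OF repeated refl H minus_one] .
  finally show "symm n p (size (mset w)) (tword w) w' = 0"
    by simp
qed (use length letters in auto)

lemma sym_form_nichols_ideal:
  assumes g: "g \<in> nichols_ideal n p"
    and distinct: "distinct w" and length: "length w \<ge> 2" and letters: "set w \<subseteq> {..<n}"
    and H: "involutive_on (set w) p"
  shows "sym_form p (mset w) g = 0"
proof -
  let ?m = "length w"
  have "symm n p ?m (comp ?m g) w = 0"
    using g length unfolding nichols_ideal_def by auto
  then have "sym_form p (mset w) (comp ?m g) = 0"
    using symm_distinct_word[OF distinct refl letters H]
      inv_weight_nonzero[of w p] involutive_on_nonzero[OF H] by auto
  moreover have "sym_form p (mset w) (comp ?m g) = sym_form p (mset w) g"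
    unfolding sym_form_def comp_def by (intro sum.cong refl) (auto dest: mset_eq_length)
  ultimately show ?thesis
    by simp
qed

definition F_plus_mod :: "nat \<Rightarrow> (nat \<Rightarrow> nat \<Rightarrow> 'a::field) \<Rightarrow> 'a tens set \<Rightarrow> 'a tens set" where
  "F_plus_mod n p L = {f. \<exists>c l. l \<in> L \<and> (\<lambda>w. f w - c * tone w - l w) \<in> nichols_ideal n p}"

lemma F_plus_modI:
  "l \<in> L \<Longrightarrow> (\<lambda>w. f w - c * tone w - l w) \<in> nichols_ideal n p \<Longrightarrow> f \<in> F_plus_mod n p L"
  unfolding F_plus_mod_def by blast

lemma F_plus_mod_lincomb:
  assumes "f \<in> F_plus_mod n p (tspan S)" "g \<in> F_plus_mod n p (tspan S)"
  shows "(\<lambda>w. a * f w + b * g w) \<in> F_plus_mod n p (tspan S)"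
proof -
  obtain c1 l1 where 1: "l1 \<in> tspan S" "(\<lambda>w. f w - c1 * tone w - l1 w) \<in> nichols_ideal n p"
    using assms(1) unfolding F_plus_mod_def by blast
  obtain c2 l2 where 2: "l2 \<in> tspan S" "(\<lambda>w. g w - c2 * tone w - l2 w) \<in> nichols_ideal n p"
    using assms(2) unfolding F_plus_mod_def by blast
  have "(\<lambda>w. a * l1 w + b * l2 w) \<in> tspan S"
    by (intro tspan_add tspan_scale 1(1) 2(1))
  moreover have "(\<lambda>w. (a * f w + b * g w) - (a * c1 + b * c2) * tone w - (a * l1 w + b * l2 w))
      \<in> nichols_ideal n p"
    using nichols_ideal_lincomb[OF 1(2) 2(2), of a b] by (simp add: algebra_simps)
  ultimately show ?thesis
    by (rule F_plus_modI)
qed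

lemma F_plus_mod_in_T:
  assumes tword: "\<And>w. set w \<subseteq> {..<n} \<Longrightarrow> tword w \<in> F_plus_mod n p (tspan S)"
    and f: "in_T n f"
  shows "f \<in> F_plus_mod n p (tspan S)"
proof -
  let ?F = "{w. f w \<noteq> 0}"
  have "(\<lambda>x. \<Sum>w\<in>G. f w * tword w x) \<in> F_plus_mod n p (tspan S)"
    if "finite G" "G \<subseteq> {w. set w \<subseteq> {..<n}}" for G
    using that
  proof (induction G rule: finite_induct)
    case empty
    have "(\<lambda>w. 0 - 0 * tone w - 0) \<in> nichols_ideal n p"
      using zero_in_nichols_ideal by simp
    from tspan_zero this have "(\<lambda>_. 0) \<in> F_plus_mod n p (tspan S)"
      by (rule F_plus_modI)
    then show ?case
      by simp
  next
    case (insert v G)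
    then have "(\<lambda>x. f v * tword v x + 1 * (\<Sum>w\<in>G. f w * tword w x)) \<in> F_plus_mod n p (tspan S)"
      by (intro F_plus_mod_lincomb tword) auto
    then show ?case
      using insert by simp
  qed
  moreover have "(\<lambda>x. \<Sum>w\<in>?F. f w * tword w x) = f"
  proof
    fix x
    have "(\<Sum>w\<in>?F. f w * tword w x) = (\<Sum>w\<in>?F. if x = w then f x else 0)"
      by (rule sum.cong) (auto simp: tword_def)
    then show "(\<Sum>w\<in>?F. f w * tword w x) = f x"
      using f unfolding in_T_def by simp
  qed
  moreover have "finite ?F" "?F \<subseteq> {w. set w \<subseteq> {..<n}}"
    using f unfolding in_T_def by auto
  ultimately show ?thesis
    by metis
qed

section \<open>The condition on the braiding\<close>

definition perm_product_condition :: "nat \<Rightarrow> (nat \<Rightarrow> nat \<Rightarrow> 'a::field) \<Rightarrow> bool" where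
  "perm_product_condition n p \<longleftrightarrow> (\<forall>m\<ge>2. \<forall>h::nat \<Rightarrow> nat.
     (\<forall>k<m. h k < n) \<and> (\<forall>k l. k < l \<and> l < m \<longrightarrow> h l < h k) \<longrightarrow>
     (\<exists>\<tau>. \<tau> permutes {..<m} \<and>
        (\<Prod>j<m - 1. (\<Prod>l\<in>{j+1..<m}. p (h (\<tau> j)) (h (\<tau> l))) - 1) \<noteq> 0))"

definition braiding_condition :: "nat \<Rightarrow> (nat \<Rightarrow> nat \<Rightarrow> 'a::field) \<Rightarrow> bool" where
  "braiding_condition n p \<longleftrightarrow> (\<forall>i<n. p i i = -1) \<and> (\<forall>i<n. \<forall>j<n. i \<noteq> j \<longrightarrow> p i j * p j i = 1)
     \<and> perm_product_condition n p"

lemma involutive_on_lessThanI: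
  assumes "\<forall>i<n. p i i = -1" "\<forall>i<n. \<forall>j<n. i \<noteq> j \<longrightarrow> p i j * p j i = 1"
  shows "involutive_on {..<n} p"
  unfolding involutive_on_def
proof (intro ballI)
  fix a b
  assume "a \<in> {..<n}" "b \<in> {..<n}"
  then show "p a b * p b a = 1"
    using assms by (cases "a = b") auto
qed

lemma rn_factor_permute_list:
  assumes \<tau>: "\<tau> permutes {..<m}"
  shows "rn_factor p (permute_list \<tau> (map h [0..<m]))
    = (\<Prod>j<m - 1. (\<Prod>l\<in>{j+1..<m}. p (h (\<tau> j)) (h (\<tau> l))) - 1)"
proof -
  have "permute_list \<tau> (map h [0..<m]) ! j = h (\<tau> j)" if "j < m" for j
    using permute_list_nth[of \<tau> "map h [0..<m]" j] \<tau> that permutes_in_image[OF \<tau>] by simp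
  then show ?thesis
    unfolding rn_factor_eq_prod by (auto intro!: prod.cong)
qed

lemma perm_product_conditionD:
  assumes condition: "perm_product_condition n p"
    and distinct: "distinct w" and length: "length w \<ge> 2" and letters: "set w \<subseteq> {..<n}"
  obtains zs where "mset zs = mset w" "rn_factor p zs \<noteq> 0"
proof -
  let ?m = "length w"
  define h where "h k = rev (sort w) ! k" for k
  have word: "map h [0..<?m] = rev (sort w)"
    unfolding h_def by (rule nth_equalityI) simp_all
  have "sorted_wrt (<) (sort w)"
    using distinct by (simp add: strict_sorted_iff)
  then have "sorted_wrt (\<lambda>x y. y < x) (map h [0..<?m])"
    unfolding word sorted_wrt_rev .
  then have "\<forall>k l. k < l \<and> l < ?m \<longrightarrow> h l < h k"
    by (auto simp: sorted_wrt_iff_nth_less)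
  moreover have "h k \<in> set w" if "k < ?m" for k
    using that unfolding h_def by (metis length_rev length_sort nth_mem set_rev set_sort)
  then have "\<forall>k<?m. h k < n"
    using letters by blast
  ultimately obtain \<tau> where \<tau>: "\<tau> permutes {..<?m}"
    "(\<Prod>j<?m - 1. (\<Prod>l\<in>{j+1..<?m}. p (h (\<tau> j)) (h (\<tau> l))) - 1) \<noteq> 0"
    using condition length unfolding perm_product_condition_def by blast
  show ?thesis
  proof
    show "mset (permute_list \<tau> (map h [0..<?m])) = mset w"
      using \<tau>(1) word by simp
    show "rn_factor p (permute_list \<tau> (map h [0..<?m])) \<noteq> 0"
      using \<tau> by (simp add: rn_factor_permute_list)
  qed
qed

lemma perm_product_conditionI:
  assumes "\<And>w. distinct w \<Longrightarrow> length w \<ge> 2 \<Longrightarrow> set w \<subseteq> {..<n} \<Longrightarrow>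
    \<exists>zs. mset zs = mset w \<and> rn_factor p zs \<noteq> 0"
  shows "perm_product_condition n p"
  unfolding perm_product_condition_def
proof (intro allI impI)
  fix m :: nat and h :: "nat \<Rightarrow> nat"
  assume "m \<ge> 2" and h: "(\<forall>k<m. h k < n) \<and> (\<forall>k l. k < l \<and> l < m \<longrightarrow> h l < h k)"
  let ?w = "map h [0..<m]"
  have "sorted_wrt (\<lambda>x y. y < x) ?w"
    using h by (auto simp: sorted_wrt_iff_nth_less)
  then have "distinct ?w"
    using strict_sorted_iff[of "rev ?w"] by (simp add: sorted_wrt_rev)
  moreover have "set ?w \<subseteq> {..<n}"
    using h by auto
  ultimately obtain zs where zs: "mset zs = mset ?w" "rn_factor p zs \<noteq> 0"
    using assms[of ?w] \<open>m \<ge> 2\<close> by auto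
  obtain \<tau> where "\<tau> permutes {..<length ?w}" "permute_list \<tau> ?w = zs"
    using mset_eq_permutation[OF zs(1)] by blast
  then show "\<exists>\<tau>. \<tau> permutes {..<m} \<and> (\<Prod>j<m - 1. (\<Prod>l\<in>{j+1..<m}. p (h (\<tau> j)) (h (\<tau> l))) - 1) \<noteq> 0"
    using zs(2) rn_factor_permute_list[of \<tau> m p h] by auto
qed

lemma sym_form_evM_vanishes:
  assumes distinct: "distinct w" and H: "involutive_on (set w) p"
    and vanishing: "\<forall>zs. mset zs = mset w \<longrightarrow> rn_factor p zs = 0"
  shows "sym_form p (mset w) (evM t) = 0"
proof (cases "mset (leaves t) = mset w")
  case True
  show ?thesis
  proof (rule linear_functional_vanishing_on_tspan[OF evM_in_span_right_normed,
        where \<Phi> = "sym_form p (mset w)"])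
    show "sym_form p (mset w) (\<lambda>x. \<Sum>k<m. c k * g k x) = (\<Sum>k<m. c k * sym_form p (mset w) (g k))"
      for m :: nat and c :: "nat \<Rightarrow> 'a" and g :: "nat \<Rightarrow> 'a tens"
      by (rule sym_form_lincomb)
    fix g :: "'a tens"
    assume "g \<in> right_normed_brackets (mset (leaves t))"
    then obtain zs where zs: "zs \<noteq> []" "mset zs = mset w" "g = evM (right_normed zs)"
      unfolding right_normed_brackets_def True by auto
    moreover have "distinct zs" "set zs = set w"
      using zs(2) distinct by (metis mset_eq_imp_distinct_iff, metis set_mset_mset)
    ultimately have "distinct zs" "involutive_on (set zs) p"
      using H by simp_all
    then obtain D where "sym_form p (mset zs) g = D * rn_factor p zs"
      using sym_form_right_normed[OF zs(1)] zs(3) by blast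
    then show "sym_form p (mset w) g = 0"
      using vanishing zs(2) by simp
  qed
next
  case False
  then show ?thesis
    by (intro sym_form_homogeneous_other[OF homogeneous_evM]) simp
qed

text \<open>Both \<open>evM\<close> and \<open>evL p\<close> are instances; \<open>\<alpha>\<close> holds the coefficients of the bracket of two
  letters.\<close>

locale bracket_evaluation =
  fixes n :: nat and p :: "nat \<Rightarrow> nat \<Rightarrow> 'a::field_char_0"
    and E :: "btree \<Rightarrow> 'a tens" and \<alpha> :: "nat \<Rightarrow> nat \<Rightarrow> 'a"
  assumes E_Leaf: "E (Leaf i) = letter i"
    and homogeneous_E: "homogeneous (E t) (mset (leaves t))"
    and E_pair: "E (Node (Leaf i) (Leaf j)) = (\<lambda>w. \<alpha> i j * tword [i, j] w - \<alpha> j i * tword [j, i] w)"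
    and \<alpha>_nonzero: "i < n \<Longrightarrow> j < n \<Longrightarrow> \<alpha> i j \<noteq> 0"
    and sym_form_E: "distinct (leaves t) \<Longrightarrow> involutive_on (set (leaves t)) p \<Longrightarrow>
      \<exists>c. c \<noteq> 0 \<and> sym_form p (mset (leaves t)) (E t) = c * sym_form p (mset (leaves t)) (evM t)"
begin

abbreviation lie_span :: "'a tens set" where
  "lie_span \<equiv> tspan (E ` {t. set (leaves t) \<subseteq> {..<n}})"

lemma lie_span_vanishing:
  fixes \<Phi> :: "'a tens \<Rightarrow> 'a"
  assumes "l \<in> lie_span"
    and linear: "\<And>(m::nat) c g. \<Phi> (\<lambda>w. \<Sum>k<m. c k * g k w) = (\<Sum>k<m. c k * \<Phi> (g k))"
    and vanishing: "\<And>t. set (leaves t) \<subseteq> {..<n} \<Longrightarrow> \<Phi> (E t) = 0"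
  shows "\<Phi> l = 0"
proof (rule linear_functional_vanishing_on_tspan[OF assms(1) linear])
  fix g
  assume "g \<in> E ` {t. set (leaves t) \<subseteq> {..<n}}"
  then show "\<Phi> g = 0"
    using vanishing by blast
qed

lemma lie_span_Nil:
  assumes "l \<in> lie_span"
  shows "l [] = 0"
proof (rule lie_span_vanishing[OF assms, where \<Phi> = "\<lambda>f. f []"])
  fix t
  have "mset [] \<noteq> mset (leaves t)"
    using leaves_ne_Nil[of t] by simp
  then show "E t [] = 0"
    by (rule homogeneousD[OF homogeneous_E])
qed simp

subsection \<open>Sufficiency\<close>

lemma distinct_tword_in_F_plus_mod:
  assumes condition: "perm_product_condition n p" and H: "involutive_on {..<n} p"
    and distinct: "distinct w" and length: "length w \<ge> 2" and letters: "set w \<subseteq> {..<n}"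
  shows "tword w \<in> F_plus_mod n p lie_span"
proof -
  obtain zs where zs: "mset zs = mset w" "rn_factor p zs \<noteq> 0"
    using perm_product_conditionD[OF condition distinct length letters] .
  let ?t = "right_normed zs"
  have "zs \<noteq> []" "distinct zs" "set zs = set w"
    using zs(1) length distinct by (metis size_mset list.size(3) not_numeral_le_zero,
        metis mset_eq_imp_distinct_iff, metis set_mset_mset)
  then have t: "leaves ?t = zs" "distinct zs" "involutive_on (set zs) p" "set (leaves ?t) \<subseteq> {..<n}"
    using leaves_right_normed involutive_on_subset[OF H] letters by auto
  obtain D where "D \<noteq> 0" "sym_form p (mset zs) (evM ?t) = D * rn_factor p zs"
    using sym_form_right_normed[OF \<open>zs \<noteq> []\<close> t(2,3)] by blast
  moreover obtain c where "c \<noteq> 0" "sym_form p (mset zs) (E ?t) = c * sym_form p (mset zs) (evM ?t)"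
    using sym_form_E[of ?t] t by auto
  ultimately have nonzero: "sym_form p (mset w) (E ?t) \<noteq> 0"
    using zs by simp
  define a where "a = inv_weight p w / sym_form p (mset w) (E ?t)"
  have "(\<lambda>x. a * E ?t x) \<in> lie_span"
    using t(4) by (intro tspan_scale tspan_base) blast
  moreover have "(\<lambda>x. 1 * tword w x - a * E ?t x) \<in> nichols_ideal n p"
  proof (rule distinct_homogeneous_in_nichols_ideal[OF distinct length letters])
    show "involutive_on (set w) p"
      using H letters by (rule involutive_on_subset)
    show "homogeneous (\<lambda>x. 1 * tword w x - a * E ?t x) (mset w)"
      using homogeneous_E[of ?t] t(1) zs(1) by (intro homogeneous_lincomb homogeneous_tword) simp
    show "sym_form p (mset w) (\<lambda>x. 1 * tword w x - a * E ?t x) = 0"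
      unfolding sym_form_lin sym_form_tword using nonzero by (simp add: a_def)
  qed
  ultimately show ?thesis
    by (intro F_plus_modI[where c = 0]) simp_all
qed

lemma tword_in_F_plus_mod:
  assumes condition: "braiding_condition n p" and letters: "set w \<subseteq> {..<n}"
  shows "tword w \<in> F_plus_mod n p lie_span"
proof -
  have H: "involutive_on {..<n} p"
    using condition unfolding braiding_condition_def by (blast intro: involutive_on_lessThanI)
  consider "w = []" | i where "w = [i]" | "length w \<ge> 2" "\<not> distinct w" | "length w \<ge> 2" "distinct w"
    by (cases w rule: remdups_adj.cases) auto
  then show ?thesis
  proof cases
    case 1
    have zero: "(\<lambda>x. tword w x - 1 * tone x - 0) = (\<lambda>_. 0)"
      using 1 by (auto simp: tword_def tone_def)
    have "(\<lambda>x. tword w x - 1 * tone x - 0) \<in> nichols_ideal n p"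
      unfolding zero by (rule zero_in_nichols_ideal)
    with tspan_zero show ?thesis
      by (rule F_plus_modI)
  next
    case (2 i)
    then have "Leaf i \<in> {t. set (leaves t) \<subseteq> {..<n}}"
      using letters by simp
    then have "E (Leaf i) \<in> lie_span"
      by (intro tspan_base imageI)
    moreover have zero: "(\<lambda>x. tword w x - 0 * tone x - E (Leaf i) x) = (\<lambda>_. 0)"
      using 2 by (auto simp: E_Leaf tword_def letter_def)
    have "(\<lambda>x. tword w x - 0 * tone x - E (Leaf i) x) \<in> nichols_ideal n p"
      unfolding zero by (rule zero_in_nichols_ideal)
    ultimately show ?thesis
      by (rule F_plus_modI)
  next
    case 3
    moreover have "\<forall>a\<in>set w. p a a = -1"
      using condition letters unfolding braiding_condition_def by auto
    ultimately have "tword w \<in> nichols_ideal n p"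
      using involutive_on_subset[OF H letters] letters by (intro repeated_tword_in_nichols_ideal) simp_all
    then have "(\<lambda>x. tword w x - 0 * tone x - 0) \<in> nichols_ideal n p"
      by simp
    with tspan_zero show ?thesis
      by (rule F_plus_modI)
  next
    case 4
    then show ?thesis
      using condition H letters by (intro distinct_tword_in_F_plus_mod) (simp_all add: braiding_condition_def)
  qed
qed

lemma B_eq_F_plus_if_braiding_condition:
  assumes "braiding_condition n p"
  shows "B_eq_F_plus n p lie_span"
  unfolding B_eq_F_plus_def
proof (rule conjI; intro allI impI)
  fix f :: "'a tens"
  assume "in_T n f"
  then have "f \<in> F_plus_mod n p lie_span"
    using tword_in_F_plus_mod[OF assms] by (rule F_plus_mod_in_T[rotated])
  then show "\<exists>c l. l \<in> lie_span \<and> (\<lambda>w. f w - c * tone w - l w) \<in> nichols_ideal n p"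
    unfolding F_plus_mod_def by blast
next
  fix c l
  assume cl: "l \<in> lie_span \<and> (\<lambda>w. c * tone w + l w) \<in> nichols_ideal n p"
  then have "c * tone [] + l [] = 0"
    unfolding nichols_ideal_def by blast
  moreover have "l [] = 0"
    using lie_span_Nil cl by blast
  ultimately have "c = 0"
    by (simp add: tone_def)
  then show "c = 0 \<and> l \<in> nichols_ideal n p"
    using cl by simp
qed

subsection \<open>Necessity\<close>

lemma B_eq_F_plusE:
  assumes "B_eq_F_plus n p lie_span" "set w \<subseteq> {..<n}"
  obtains l c where "l \<in> lie_span" "(\<lambda>x. tword w x - c * tone x - l x) \<in> nichols_ideal n p"
proof -
  have "\<forall>f. in_T n f \<longrightarrow> (\<exists>c l. l \<in> lie_span \<and> (\<lambda>w. f w - c * tone w - l w) \<in> nichols_ideal n p)"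
    using assms(1) unfolding B_eq_F_plus_def by (rule conjunct1)
  then have "\<exists>c l. l \<in> lie_span \<and> (\<lambda>x. tword w x - c * tone x - l x) \<in> nichols_ideal n p"
    using in_T_tword[OF assms(2)] by blast
  then show ?thesis
    using that by blast
qed

lemma symm_comp_2_nichols_ideal: "g \<in> nichols_ideal n p \<Longrightarrow> symm n p 2 (comp 2 g) w = 0"
  unfolding nichols_ideal_def by auto

lemma lie_span_square:
  assumes l: "l \<in> lie_span"
  shows "l [i, i] = 0"
proof (rule lie_span_vanishing[OF l, where \<Phi> = "\<lambda>f. f [i, i]"])
  fix t
  show "E t [i, i] = 0"
  proof (cases "mset (leaves t) = mset [i, i]")
    case True
    then have "t = Node (Leaf i) (Leaf i)"
      using mset_leaves_eq_pair by blast
    then show ?thesis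
      by (simp add: E_pair tword_def)
  qed (auto intro: homogeneousD[OF homogeneous_E])
qed simp

lemma lie_span_pair:
  assumes l: "l \<in> lie_span" and "i \<noteq> j"
  shows "\<alpha> j i * l [i, j] + \<alpha> i j * l [j, i] = 0"
proof (rule lie_span_vanishing[OF l, where \<Phi> = "\<lambda>f. \<alpha> j i * f [i, j] + \<alpha> i j * f [j, i]"])
  show "(\<alpha> j i * (\<Sum>k<m. c k * g k [i, j]) + \<alpha> i j * (\<Sum>k<m. c k * g k [j, i]))
      = (\<Sum>k<m. c k * (\<alpha> j i * g k [i, j] + \<alpha> i j * g k [j, i]))" for m :: nat and c g
    by (simp add: sum.distrib sum_distrib_left algebra_simps)
  fix t
  show "\<alpha> j i * E t [i, j] + \<alpha> i j * E t [j, i] = 0"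
  proof (cases "mset (leaves t) = mset [i, j]")
    case True
    then consider "t = Node (Leaf i) (Leaf j)" | "t = Node (Leaf j) (Leaf i)"
      using mset_leaves_eq_pair by blast
    then show ?thesis
      using \<open>i \<noteq> j\<close> by cases (simp_all add: E_pair tword_def mult.commute)
  next
    case False
    moreover have "mset [j, i] = mset [i, j]"
      by (simp add: add_mset_commute)
    ultimately have "E t [i, j] = 0" "E t [j, i] = 0"
      using homogeneousD[OF homogeneous_E[of t], of "[i, j]"] homogeneousD[OF homogeneous_E[of t], of "[j, i]"]
      by metis+
    then show ?thesis
      by simp
  qed
qed

lemma minus_one_if_B_eq_F_plus:
  assumes B: "B_eq_F_plus n p lie_span" and i: "i < n"
  shows "p i i = -1"
proof -
  have "set [i, i] \<subseteq> {..<n}"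
    using i by simp
  then obtain l c where l: "l \<in> lie_span"
    and ideal: "(\<lambda>x. tword [i, i] x - c * tone x - l x) \<in> nichols_ideal n p"
    by (rule B_eq_F_plusE[OF B])
  have "l [i, i] = 0"
    using l by (rule lie_span_square)
  moreover have "(1 - l [i, i]) * (1 + p i i) = 0"
    using symm_comp_2_nichols_ideal[OF ideal, of "[i, i]"]
    unfolding symm_square[OF i] by (simp add: comp_def tword_def tone_def)
  ultimately show ?thesis
    by (simp add: add_eq_0_iff)
qed

lemma involutive_if_B_eq_F_plus:
  assumes B: "B_eq_F_plus n p lie_span" and ij: "i < n" "j < n" "i \<noteq> j"
  shows "p i j * p j i = 1"
proof -
  have "set [i, j] \<subseteq> {..<n}"
    using ij by simp
  then obtain l c where l: "l \<in> lie_span"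
    and ideal: "(\<lambda>x. tword [i, j] x - c * tone x - l x) \<in> nichols_ideal n p"
    by (rule B_eq_F_plusE[OF B])
  let ?x = "l [i, j]" and ?y = "l [j, i]"
  have relation: "\<alpha> j i * ?x + \<alpha> i j * ?y = 0"
    using l ij(3) by (rule lie_span_pair)
  have "(1 - ?x) - ?y * p j i = 0"
    using symm_comp_2_nichols_ideal[OF ideal, of "[i, j]"]
    unfolding symm_pair[OF ij(3,1,2)] using ij(3) by (simp add: comp_def tword_def tone_def)
  moreover have y: "?y = (1 - ?x) * p i j"
    using symm_comp_2_nichols_ideal[OF ideal, of "[j, i]"]
    unfolding symm_pair[OF ij(3)[symmetric] ij(2,1)] using ij(3) by (simp add: comp_def tword_def tone_def)
  ultimately have "(1 - ?x) * (1 - p i j * p j i) = 0"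
    by (simp add: algebra_simps)
  moreover have "1 - ?x \<noteq> 0"
  proof
    assume "1 - ?x = 0"
    then have "?x = 1" "?y = 0"
      using y by simp_all
    then show False
      using relation \<alpha>_nonzero ij by simp
  qed
  ultimately show ?thesis
    by simp
qed

lemma perm_product_condition_if_B_eq_F_plus:
  assumes B: "B_eq_F_plus n p lie_span" and H: "involutive_on {..<n} p"
  shows "perm_product_condition n p"
proof (rule perm_product_conditionI, rule ccontr)
  fix w
  assume distinct: "distinct w" and length: "length w \<ge> 2" and letters: "set w \<subseteq> {..<n}"
    and "\<not> (\<exists>zs. mset zs = mset w \<and> rn_factor p zs \<noteq> 0)"
  then have vanishing: "\<forall>zs. mset zs = mset w \<longrightarrow> rn_factor p zs = 0"
    by blast
  have Hw: "involutive_on (set w) p"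
    using H letters by (rule involutive_on_subset)
  obtain l c where l: "l \<in> lie_span"
    and ideal: "(\<lambda>x. tword w x - c * tone x - l x) \<in> nichols_ideal n p"
    by (rule B_eq_F_plusE[OF B letters])
  have "sym_form p (mset w) l = 0"
  proof (rule lie_span_vanishing[OF l sym_form_lincomb])
    fix t
    show "sym_form p (mset w) (E t) = 0"
    proof (cases "mset (leaves t) = mset w")
      case True
      then have "distinct (leaves t)" "involutive_on (set (leaves t)) p"
        using distinct Hw by (metis mset_eq_imp_distinct_iff, metis set_mset_mset)
      then obtain a where "sym_form p (mset (leaves t)) (E t) = a * sym_form p (mset (leaves t)) (evM t)"
        using sym_form_E by blast
      then show ?thesis
        using sym_form_evM_vanishes[OF distinct Hw vanishing] True by simp
    qed (auto intro: sym_form_homogeneous_other[OF homogeneous_E])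
  qed
  moreover have "sym_form p (mset w) tone = 0"
    using length by (intro sym_form_homogeneous_other[of _ "{#}"])
      (auto simp: homogeneous_def tone_def)
  moreover have "sym_form p (mset w) (\<lambda>x. tword w x - c * tone x - l x) = 0"
    using sym_form_nichols_ideal[OF ideal distinct length letters Hw] .
  ultimately have "inv_weight p w = 0"
    by (simp add: sym_form_diff sym_form_scale sym_form_tword)
  moreover have "inv_weight p w \<noteq> 0"
    using involutive_on_nonzero[OF Hw] by (intro inv_weight_nonzero) blast
  ultimately show False
    by contradiction
qed

lemma B_eq_F_plus_iff: "B_eq_F_plus n p lie_span \<longleftrightarrow> braiding_condition n p"
proof
  assume B: "B_eq_F_plus n p lie_span"
  have minus_one: "\<forall>i<n. p i i = -1"
    using minus_one_if_B_eq_F_plus[OF B] by blast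
  moreover have involutive: "\<forall>i<n. \<forall>j<n. i \<noteq> j \<longrightarrow> p i j * p j i = 1"
    using involutive_if_B_eq_F_plus[OF B] by blast
  moreover have "perm_product_condition n p"
    using perm_product_condition_if_B_eq_F_plus[OF B involutive_on_lessThanI[OF minus_one involutive]] .
  ultimately show "braiding_condition n p"
    unfolding braiding_condition_def by blast
qed (rule B_eq_F_plus_if_braiding_condition)

end

lemma bracket_evaluation_evM: "bracket_evaluation n p evM (\<lambda>_ _. 1)"
proof
  show "evM (Node (Leaf i) (Leaf j)) = (\<lambda>w. 1 * tword [i, j] w - 1 * tword [j, i] w)" for i j
    by (simp add: tmul_letter_letter)
qed (auto simp: homogeneous_evM intro: exI[of _ 1])

lemma bracket_evaluation_evL:
  assumes "\<forall>i<n. \<forall>j<n. p i j \<noteq> 0"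
  shows "bracket_evaluation n p (evL p) (\<lambda>i j. p j i)"
proof
  show "evL p (Node (Leaf i) (Leaf j)) = (\<lambda>w. p j i * tword [i, j] w - p i j * tword [j, i] w)" for i j
    by (simp add: tmul_letter_letter pw_def)
  show "\<exists>c. c \<noteq> 0 \<and> sym_form p (mset (leaves t)) (evL p t) = c * sym_form p (mset (leaves t)) (evM t)"
    if "distinct (leaves t)" "involutive_on (set (leaves t)) p" for t
    using sym_form_evL[OF that] by (intro exI[of _ "(-1) ^ size t"]) simp
qed (use assms in \<open>auto simp: homogeneous_evL\<close>)

theorem proposition5p4:
  fixes n :: nat and p :: "nat \<Rightarrow> nat \<Rightarrow> 'a::field_char_0"
  assumes "\<forall>i<n. \<forall>j<n. p i j \<noteq> 0"
  shows "(B_eq_F_plus n p (lie_L n p) \<longleftrightarrow> B_eq_F_plus n p (lie_minus n))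
       \<and> (B_eq_F_plus n p (lie_minus n) \<longleftrightarrow>
          ((\<forall>i<n. p i i = -1) \<and> (\<forall>i<n. \<forall>j<n. i \<noteq> j \<longrightarrow> p i j * p j i = 1)
           \<and> (\<forall>m\<ge>2. \<forall>h::nat \<Rightarrow> nat.
                 (\<forall>k<m. h k < n) \<and> (\<forall>k l. k < l \<and> l < m \<longrightarrow> h l < h k) \<longrightarrow>
                 (\<exists>\<tau>. \<tau> permutes {..<m} \<and>
                    (\<Prod>j<m - 1. (\<Prod>l\<in>{j+1..<m}. p (h (\<tau> j)) (h (\<tau> l))) - 1) \<noteq> 0))))"
proof -
  have "B_eq_F_plus n p (lie_minus n) \<longleftrightarrow> braiding_condition n p"
    unfolding lie_minus_def by (rule bracket_evaluation.B_eq_F_plus_iff[OF bracket_evaluation_evM])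
  moreover have "B_eq_F_plus n p (lie_L n p) \<longleftrightarrow> braiding_condition n p"
    unfolding lie_L_def by (rule bracket_evaluation.B_eq_F_plus_iff[OF bracket_evaluation_evL[OF assms]])
  ultimately show ?thesis
    unfolding braiding_condition_def perm_product_condition_def by blast
qed

end
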